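(* There is a unique Lie algebra morphism $\rho_{\mathfrak g}:\bar{\mathfrak t}_{1,n}\to\mathcal H_n(\mathfrak g)$ such that $\bar x_i\mapsto\sum_\alpha \mathrm x_\alpha\otimes e_\alpha^{(i)}$, $\bar y_i\mapsto-\sum_\alpha\partial_\alpha\otimes e_\alpha^{(i)}$, $\bar t_{ij}\mapsto 1\otimes t_{\mathfrak g}^{(ij)}$ (classes in $\mathcal H_n(\mathfrak g)$).
   Context: $\mathfrak g$ is a finite-dimensional complex Lie algebra with nondegenerate invariant symmetric tensor $t_{\mathfrak g}\in S^2(\mathfrak g)^{\mathfrak g}$, inducing an invariant nondegenerate symmetric pairing $\langle\,,\rangle$; $(e_\alpha)$ is a basis with $t_{\mathfrak g}=\sum_\alpha e_\alpha\otimes e_\alpha$. $D(\mathfrak g)$ is the algebra generated by $\mathrm x_a,\partial_a$ ($a\in\mathfrak g$), linear in $a$, with $[\mathrm x_a,\mathrm x_b]=[\partial_a,\partial_b]=0$, $[\partial_a,\mathrm x_b]=\langle a,b\rangle$; $\mathrm x_\alpha=\mathrm x_{e_\alpha}$, $\partial_\alpha=\partial_{e_\alpha}$. $X_a=\sum_\alpha\mathrm x_{[a,e_\alpha]}\partial_{e_\alpha}$. $A_n=D(\mathfrak g)\otimes U(\mathfrak g)^{\otimes n}$, $Y_a=X_a\otimes1+1\otimes\sum_{i=1}^na^{(i)}$ (where $u^{(i)}$ is $u$ in the $i$-th factor), $\mathfrak g^{\mathrm{diag}}=\{Y_a\}$, and $\mathcal H_n(\mathfrak g)=\{x\in A_n:Y_ax\in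 A_n\mathfrak g^{\mathrm{diag}}\ \forall a\}/A_n\mathfrak g^{\mathrm{diag}}$ (Hecke algebra). $t_{\mathfrak g}^{(ij)}=\sum_\alpha e_\alpha^{(i)}e_\alpha^{(j)}$. $\bar{\mathfrak t}_{1,n}=\mathfrak t_{1,n}/(\sum x_i,\sum y_i)$ where $\mathfrak t_{1,n}$ has generators $x_i,y_i,t_{ij}$ and relations $t_{ij}=t_{ji}$, $[t_{ij},t_{ik}+t_{jk}]=0$, $[t_{ij},t_{kl}]=0$, $[x_i,y_j]=t_{ij}$ ($i\ne j$), $[x_i,x_j]=[y_i,y_j]=0$, $[x_i,y_i]=-\sum_{j\ne i}t_{ij}$, $[x_i,t_{jk}]=[y_i,t_{jk}]=0$, $[x_i+x_j,t_{ij}]=[y_i+y_j,t_{ij}]=0$ ($i,j,k,l$ distinct). *)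

theory Defs
  imports Complex_Main
begin

text \<open>An element of the free associative algebra on generators of type 'v is a
finitely supported function from words to complex coefficients.  Operations are
defined on all functions; the algebra itself is the carrier fa_fin.\<close>

type_synonym 'v fa = "'v list \<Rightarrow> complex"

definition fa_fin :: "'v fa set" where
  "fa_fin = {f. finite {w. f w \<noteq> 0}}"

definition fa_zero :: "'v fa" where "fa_zero = (\<lambda>_. 0)"
definition fa_one :: "'v fa" where "fa_one = (\<lambda>w. if w = [] then 1 else 0)"
definition fa_gen :: "'v \<Rightarrow> 'v fa" where "fa_gen v = (\<lambda>w. if w = [v] then 1 else 0)"
definition fa_add :: "'v fa \<Rightarrow> 'v fa \<Rightarrow> 'v fa" where "fa_add f g = (\<lambda>w. f w + g w)"
definition fa_smult :: "complex \<Rightarrow> 'v fa \<Rightarrow> 'v fa" where "fa_smult c f = (\<lambda>w. c * f w)"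
definition fa_sub :: "'v fa \<Rightarrow> 'v fa \<Rightarrow> 'v fa" where "fa_sub f g = (\<lambda>w. f w - g w)"
definition fa_mul :: "'v fa \<Rightarrow> 'v fa \<Rightarrow> 'v fa" where
  "fa_mul f g = (\<lambda>w. \<Sum>k\<le>length w. f (take k w) * g (drop k w))"
definition fa_sum :: "('i \<Rightarrow> 'v fa) \<Rightarrow> 'i set \<Rightarrow> 'v fa" where
  "fa_sum F A = (\<lambda>w. \<Sum>i\<in>A. F i w)"
definition fa_br :: "'v fa \<Rightarrow> 'v fa \<Rightarrow> 'v fa" where
  "fa_br f g = fa_sub (fa_mul f g) (fa_mul g f)"

definition fa_subspace :: "'v fa set \<Rightarrow> bool" where
  "fa_subspace I \<longleftrightarrow> I \<subseteq> fa_fin \<and> fa_zero \<in> I \<and> (\<forall>x\<in>I. \<forall>y\<in>I. fa_add x y \<in> I)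
     \<and> (\<forall>c. \<forall>x\<in>I. fa_smult c x \<in> I)"

definition two_sided_ideal :: "'v fa set \<Rightarrow> bool" where
  "two_sided_ideal I \<longleftrightarrow> fa_subspace I \<and> (\<forall>a\<in>fa_fin. \<forall>x\<in>I. fa_mul a x \<in> I \<and> fa_mul x a \<in> I)"

definition left_ideal :: "'v fa set \<Rightarrow> bool" where
  "left_ideal I \<longleftrightarrow> fa_subspace I \<and> (\<forall>a\<in>fa_fin. \<forall>x\<in>I. fa_mul a x \<in> I)"

definition ideal_gen :: "'v fa set \<Rightarrow> 'v fa set" where
  "ideal_gen S = \<Inter>{I. two_sided_ideal I \<and> S \<subseteq> I}"

definition left_ideal_gen :: "'v fa set \<Rightarrow> 'v fa set" where
  "left_ideal_gen S = \<Inter>{I. left_ideal I \<and> S \<subseteq> I}"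

definition lie_sub :: "'v fa set \<Rightarrow> bool" where
  "lie_sub K \<longleftrightarrow> fa_subspace K \<and> (\<forall>x\<in>K. \<forall>y\<in>K. fa_br x y \<in> K)"

definition lie_sub_gen :: "'v fa set \<Rightarrow> 'v fa set" where
  "lie_sub_gen S = \<Inter>{K. lie_sub K \<and> S \<subseteq> K}"

definition lie_ideal_in :: "'v fa set \<Rightarrow> 'v fa set \<Rightarrow> bool" where
  "lie_ideal_in L K \<longleftrightarrow> fa_subspace K \<and> K \<subseteq> L \<and> (\<forall>x\<in>L. \<forall>k\<in>K. fa_br x k \<in> K)"

definition lie_ideal_gen :: "'v fa set \<Rightarrow> 'v fa set \<Rightarrow> 'v fa set" where
  "lie_ideal_gen L S = \<Inter>{K. lie_ideal_in L K \<and> S \<subseteq> K}"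

text \<open>[e_a, e_b] = sum_k c a b k e_k; the invariant form is <e_a,e_b> = delta_ab,
so that t_g = sum_a e_a \<otimes> e_a.\<close>

definition quadratic_lie :: "nat \<Rightarrow> (nat \<Rightarrow> nat \<Rightarrow> nat \<Rightarrow> complex) \<Rightarrow> bool" where
  "quadratic_lie d c \<longleftrightarrow>
     (\<forall>a<d. \<forall>b<d. \<forall>k<d. c a b k = - c b a k)
   \<and> (\<forall>a<d. \<forall>b<d. \<forall>k<d. \<forall>l<d.
        (\<Sum>m<d. c a b m * c m k l + c b k m * c m a l + c k a m * c m b l) = 0)
   \<and> (\<forall>a<d. \<forall>b<d. \<forall>k<d. c a b k = c b k a)"

section \<open>A_n = D(g) \<otimes> U(g)^{\<otimes> n}, presented by generators and relations\<close>

datatype agen = Xg nat | Dg nat | Eg nat nat  (* x_alpha, partial_alpha, e_alpha^{(i)} *)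

definition An_rels :: "nat \<Rightarrow> (nat \<Rightarrow> nat \<Rightarrow> nat \<Rightarrow> complex) \<Rightarrow> nat \<Rightarrow> agen fa set" where
  "An_rels d c n =
     {fa_br (fa_gen (Xg a)) (fa_gen (Xg b)) | a b. a < d \<and> b < d}
   \<union> {fa_br (fa_gen (Dg a)) (fa_gen (Dg b)) | a b. a < d \<and> b < d}
   \<union> {fa_sub (fa_br (fa_gen (Dg a)) (fa_gen (Xg b))) (if a = b then fa_one else fa_zero) | a b. a < d \<and> b < d}
   \<union> {fa_sub (fa_br (fa_gen (Eg a i)) (fa_gen (Eg b i))) (fa_sum (\<lambda>k. fa_smult (c a b k) (fa_gen (Eg k i))) {..<d})
        | a b i. a < d \<and> b < d \<and> i \<in> {1..n}}
   \<union> {fa_br (fa_gen (Eg a i)) (fa_gen (Eg b j)) | a b i j. a < d \<and> b < d \<and> i \<in> {1..n} \<and> j \<in> {1..n} \<and> i \<noteq> j}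
   \<union> {fa_br (fa_gen (Xg a)) (fa_gen (Eg b i)) | a b i. a < d \<and> b < d \<and> i \<in> {1..n}}
   \<union> {fa_br (fa_gen (Dg a)) (fa_gen (Eg b i)) | a b i. a < d \<and> b < d \<and> i \<in> {1..n}}"

text \<open>Y_a for a = sum_beta a_beta e_beta:
  Y_a = sum_alpha x_{[a,e_alpha]} partial_alpha + sum_i a^{(i)}.\<close>

definition Yel :: "nat \<Rightarrow> (nat \<Rightarrow> nat \<Rightarrow> nat \<Rightarrow> complex) \<Rightarrow> nat \<Rightarrow> (nat \<Rightarrow> complex) \<Rightarrow> agen fa" where
  "Yel d c n a = fa_add
     (fa_sum (\<lambda>\<alpha>. fa_sum (\<lambda>\<beta>. fa_sum (\<lambda>k.
         fa_smult (a \<beta> * c \<beta> \<alpha> k) (fa_mul (fa_gen (Xg k)) (fa_gen (Dg \<alpha>)))) {..<d}) {..<d}) {..<d})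
     (fa_sum (\<lambda>i. fa_sum (\<lambda>\<beta>. fa_smult (a \<beta>) (fa_gen (Eg \<beta> i))) {..<d}) {1..n})"

text \<open>Preimage in the free algebra of the left ideal A_n g^diag of A_n.\<close>
definition Jdiag :: "nat \<Rightarrow> (nat \<Rightarrow> nat \<Rightarrow> nat \<Rightarrow> complex) \<Rightarrow> nat \<Rightarrow> agen fa set" where
  "Jdiag d c n = left_ideal_gen (ideal_gen (An_rels d c n) \<union> range (Yel d c n))"

text \<open>Preimage in the free algebra of {x \<in> A_n. Y_a x \<in> A_n g^diag for all a}.\<close>
definition Nnorm :: "nat \<Rightarrow> (nat \<Rightarrow> nat \<Rightarrow> nat \<Rightarrow> complex) \<Rightarrow> nat \<Rightarrow> agen fa set" where
  "Nnorm d c n = {p \<in> fa_fin. \<forall>a. fa_mul (Yel d c n a) p \<in> Jdiag d c n}"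

definition cosH :: "nat \<Rightarrow> (nat \<Rightarrow> nat \<Rightarrow> nat \<Rightarrow> complex) \<Rightarrow> nat \<Rightarrow> agen fa \<Rightarrow> agen fa set" where
  "cosH d c n p = {fa_add p j | j. j \<in> Jdiag d c n}"

text \<open>The Hecke algebra H_n(g), as the set of classes.\<close>
definition Hecke :: "nat \<Rightarrow> (nat \<Rightarrow> nat \<Rightarrow> nat \<Rightarrow> complex) \<Rightarrow> nat \<Rightarrow> agen fa set set" where
  "Hecke d c n = cosH d c n ` Nnorm d c n"

datatype tgen = TX nat | TY nat | TT nat nat

definition t_gens :: "nat \<Rightarrow> tgen set" where
  "t_gens n = {TX i | i. i \<in> {1..n}} \<union> {TY i | i. i \<in> {1..n}}
             \<union> {TT i j | i j. i \<in> {1..n} \<and> j \<in> {1..n} \<and> i \<noteq> j}"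

text \<open>The free Lie algebra on t_gens, realised as the Lie subalgebra of the free
associative algebra generated by the generators.\<close>
definition tL :: "nat \<Rightarrow> tgen fa set" where
  "tL n = lie_sub_gen (fa_gen ` t_gens n)"

abbreviation tx :: "nat \<Rightarrow> tgen fa" where "tx i \<equiv> fa_gen (TX i)"
abbreviation ty :: "nat \<Rightarrow> tgen fa" where "ty i \<equiv> fa_gen (TY i)"
abbreviation tt :: "nat \<Rightarrow> nat \<Rightarrow> tgen fa" where "tt i j \<equiv> fa_gen (TT i j)"

definition t_rels :: "nat \<Rightarrow> tgen fa set" where
  "t_rels n =
     {fa_sub (tt i j) (tt j i) | i j. i \<in> {1..n} \<and> j \<in> {1..n} \<and> i \<noteq> j}
   \<union> {fa_br (tt i j) (fa_add (tt i k) (tt j k)) | i j k.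
        i \<in> {1..n} \<and> j \<in> {1..n} \<and> k \<in> {1..n} \<and> distinct [i, j, k]}
   \<union> {fa_br (tt i j) (tt k l) | i j k l.
        i \<in> {1..n} \<and> j \<in> {1..n} \<and> k \<in> {1..n} \<and> l \<in> {1..n} \<and> distinct [i, j, k, l]}
   \<union> {fa_sub (fa_br (tx i) (ty j)) (tt i j) | i j. i \<in> {1..n} \<and> j \<in> {1..n} \<and> i \<noteq> j}
   \<union> {fa_br (tx i) (tx j) | i j. i \<in> {1..n} \<and> j \<in> {1..n}}
   \<union> {fa_br (ty i) (ty j) | i j. i \<in> {1..n} \<and> j \<in> {1..n}}
   \<union> {fa_add (fa_br (tx i) (ty i)) (fa_sum (\<lambda>j. tt i j) ({1..n} - {i})) | i. i \<in> {1..n}}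
   \<union> {fa_br (tx i) (tt j k) | i j k. i \<in> {1..n} \<and> j \<in> {1..n} \<and> k \<in> {1..n} \<and> distinct [i, j, k]}
   \<union> {fa_br (ty i) (tt j k) | i j k. i \<in> {1..n} \<and> j \<in> {1..n} \<and> k \<in> {1..n} \<and> distinct [i, j, k]}
   \<union> {fa_br (fa_add (tx i) (tx j)) (tt i j) | i j. i \<in> {1..n} \<and> j \<in> {1..n} \<and> i \<noteq> j}
   \<union> {fa_br (fa_add (ty i) (ty j)) (tt i j) | i j. i \<in> {1..n} \<and> j \<in> {1..n} \<and> i \<noteq> j}
   \<union> {fa_sum tx {1..n}, fa_sum ty {1..n}}"

definition tR :: "nat \<Rightarrow> tgen fa set" where
  "tR n = lie_ideal_gen (tL n) (t_rels n)"

definition cosT :: "nat \<Rightarrow> tgen fa \<Rightarrow> tgen fa set" where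
  "cosT n u = {fa_add u r | r. r \<in> tR n}"

text \<open>tbar_{1,n} = tL / tR, as the set of classes.\<close>
definition tbar :: "nat \<Rightarrow> tgen fa set set" where
  "tbar n = cosT n ` tL n"

text \<open>phi is a Lie algebra morphism from tbar_{1,n} to H_n(g) (with commutator
bracket), extensional outside tbar_{1,n}.  Operations on classes are computed
on representatives.\<close>
definition lie_hom_tH :: "nat \<Rightarrow> (nat \<Rightarrow> nat \<Rightarrow> nat \<Rightarrow> complex) \<Rightarrow> nat
    \<Rightarrow> (tgen fa set \<Rightarrow> agen fa set) \<Rightarrow> bool" where
  "lie_hom_tH d c n \<phi> \<longleftrightarrow>
     (\<forall>U\<in>tbar n. \<phi> U \<in> Hecke d c n)
   \<and> (\<forall>U. U \<notin> tbar n \<longrightarrow> \<phi> U = {})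
   \<and> (\<forall>u\<in>tL n. \<forall>v\<in>tL n. \<forall>p\<in>\<phi> (cosT n u). \<forall>q\<in>\<phi> (cosT n v).
        \<phi> (cosT n (fa_add u v)) = cosH d c n (fa_add p q)
      \<and> \<phi> (cosT n (fa_br u v)) = cosH d c n (fa_br p q))
   \<and> (\<forall>u\<in>tL n. \<forall>p\<in>\<phi> (cosT n u). \<forall>s.
        \<phi> (cosT n (fa_smult s u)) = cosH d c n (fa_smult s p))"

end

theory Submission
  imports Defs
begin

text \<open>
  Send the generators of the free Lie algebra on the x_i, y_i, t_ij to the prescribed elements
  of A_n and extend to the free associative algebra.  Each image is g-invariant, so it commutes
  with every Y_a modulo the relations of A_n; hence all images lie in the normaliser N of the
  left ideal J = A_n g^diag.  N is a subalgebra in which J is a two-sided ideal, so N/J = H_n(g)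
  is an associative algebra.  Every defining relation of tbar_{1,n} is sent into J: most of them
  hold already in A_n by a direct computation with the structure constants, whereas
  [x_i, y_i] + sum_j t_ij and sum_i x_i, sum_i y_i only vanish modulo the elements Y_a.  The map
  therefore factors through tbar_{1,n}; it is unique because tbar_{1,n} is generated by the
  classes of its generators.
\<close>

section \<open>Formal power series in noncommuting variables\<close>

lemma fa_mul_Nil: "fa_mul f g [] = f [] * g []"
  by (simp add: fa_mul_def)

lemma fa_mul_Cons: "fa_mul f g (a # w) = f [] * g (a # w) + fa_mul (\<lambda>u. f (a # u)) g w"
  unfolding fa_mul_def by (simp add: sum.atMost_Suc_shift del: sum.atMost_Suc)

lemma fa_mul_add_left: "fa_mul (\<lambda>u. f u + g u) h w = fa_mul f h w + fa_mul g h w"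
  unfolding fa_mul_def by (simp add: distrib_right sum.distrib)

lemma fa_mul_add_right: "fa_mul h (\<lambda>u. f u + g u) w = fa_mul h f w + fa_mul h g w"
  unfolding fa_mul_def by (simp add: distrib_left sum.distrib)

lemma fa_mul_smult_left: "fa_mul (\<lambda>u. s * f u) h w = s * fa_mul f h w"
  unfolding fa_mul_def by (simp add: sum_distrib_left mult.assoc)

lemma fa_mul_assoc: "fa_mul (fa_mul f g) h w = fa_mul f (fa_mul g h) w"
proof (induction w arbitrary: f g h)
  case Nil
  then show ?case by (simp add: fa_mul_Nil)
next
  case (Cons a w)
  have tail: "(\<lambda>u. fa_mul f g (a # u)) = (\<lambda>u. f [] * g (a # u) + fa_mul (\<lambda>u. f (a # u)) g u)"
    by (simp add: fa_mul_Cons)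
  have "fa_mul (fa_mul f g) h (a # w) = f [] * g [] * h (a # w)
     + (f [] * fa_mul (\<lambda>u. g (a # u)) h w + fa_mul (fa_mul (\<lambda>u. f (a # u)) g) h w)"
    by (simp add: fa_mul_Cons tail fa_mul_add_left fa_mul_smult_left fa_mul_Nil del: fa_mul_def)
  also have "\<dots> = fa_mul f (fa_mul g h) (a # w)"
    by (simp add: fa_mul_Cons Cons.IH fa_mul_Nil algebra_simps)
  finally show ?case .
qed

lemma fa_mul_scalar_left: "fa_mul (\<lambda>w. if w = [] then c else 0) f = fa_smult c f"
  unfolding fa_mul_def fa_smult_def fun_eq_iff by (intro allI, subst sum.remove[of _ 0]) auto

lemma fa_mul_scalar_right: "fa_mul f (\<lambda>w. if w = [] then c else 0) = fa_smult c f"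
proof
  fix w
  show "fa_mul f (\<lambda>w. if w = [] then c else 0) w = fa_smult c f w"
    unfolding fa_mul_def fa_smult_def
    by (subst sum.remove[of _ "length w"]) (auto simp: mult.commute)
qed

text \<open>
  fa_mul is defined for all coefficient functions, finitely supported or not: it is the Cauchy
  product of noncommutative power series.  Wrapping these functions in a type makes them a
  ring_1, so computations can use the simplifier's ring normalisation; the free algebra is the
  subring of finitely supported series (is_poly).
\<close>

datatype 'v nc_series = NC (nc_coeff: "'v fa")

lemma nc_series_eqI: "nc_coeff p = nc_coeff q \<Longrightarrow> p = q"
  by (cases p, cases q) auto

instantiation nc_series :: (type) ring_1
begin

definition "0 = NC fa_zero"
definition "1 = NC fa_one"
definition "p + q = NC (fa_add (nc_coeff p) (nc_coeff q))"
definition "p - q = NC (fa_sub (nc_coeff p) (nc_coeff q))"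
definition "- p = NC (\<lambda>w. - nc_coeff p w)"
definition "p * q = NC (fa_mul (nc_coeff p) (nc_coeff q))"

instance
proof
  fix a b c :: "'a nc_series"
  show "a * b * c = a * (b * c)"
    by (simp add: times_nc_series_def fa_mul_assoc fun_eq_iff)
  show "a + b + c = a + (b + c)"
    by (simp add: plus_nc_series_def fa_add_def add.assoc)
  show "a + b = b + a"
    by (simp add: plus_nc_series_def fa_add_def add.commute)
  show "0 + a = a"
    by (cases a) (simp add: plus_nc_series_def fa_add_def zero_nc_series_def fa_zero_def)
  show "- a + a = 0"
    by (simp add: plus_nc_series_def fa_add_def zero_nc_series_def fa_zero_def uminus_nc_series_def)
  show "a - b = a + - b"
    by (simp add: plus_nc_series_def fa_add_def minus_nc_series_def fa_sub_def uminus_nc_series_def)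
  show "(a + b) * c = a * c + b * c"
    by (simp add: plus_nc_series_def times_nc_series_def fa_add_def[abs_def] fun_eq_iff fa_mul_add_left)
  show "a * (b + c) = a * b + a * c"
    by (simp add: plus_nc_series_def times_nc_series_def fa_add_def[abs_def] fun_eq_iff fa_mul_add_right)
  show "1 * a = a"
    using fa_mul_scalar_left[of 1 "nc_coeff a"]
    by (cases a) (simp add: one_nc_series_def times_nc_series_def fa_one_def fa_smult_def)
  show "a * 1 = a"
    using fa_mul_scalar_right[of "nc_coeff a" 1]
    by (cases a) (simp add: one_nc_series_def times_nc_series_def fa_one_def fa_smult_def)
  show "(0::'a nc_series) \<noteq> 1"
    by (simp add: zero_nc_series_def one_nc_series_def fa_zero_def fa_one_def fun_eq_iff)
qed

end

lemma nc_coeff_add [simp]: "nc_coeff (p + q) = fa_add (nc_coeff p) (nc_coeff q)"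
  by (simp add: plus_nc_series_def)
lemma nc_coeff_sub [simp]: "nc_coeff (p - q) = fa_sub (nc_coeff p) (nc_coeff q)"
  by (simp add: minus_nc_series_def)
lemma nc_coeff_mul [simp]: "nc_coeff (p * q) = fa_mul (nc_coeff p) (nc_coeff q)"
  by (simp add: times_nc_series_def)
lemma nc_coeff_zero [simp]: "nc_coeff 0 = fa_zero"
  by (simp add: zero_nc_series_def)
lemma nc_coeff_one [simp]: "nc_coeff 1 = fa_one"
  by (simp add: one_nc_series_def)
lemma nc_coeff_uminus [simp]: "nc_coeff (- p) = (\<lambda>w. - nc_coeff p w)"
  by (simp add: uminus_nc_series_def)

lemma NC_nc_coeff [simp]: "NC (nc_coeff p) = p"
  by (cases p) auto

definition scalar :: "complex \<Rightarrow> 'v nc_series" where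
  "scalar c = NC (\<lambda>w. if w = [] then c else 0)"

lemma nc_coeff_scalar [simp]: "nc_coeff (scalar c) = (\<lambda>w. if w = [] then c else 0)"
  by (simp add: scalar_def)

lemma nc_coeff_scalar_mul: "nc_coeff (scalar c * p) = fa_smult c (nc_coeff p)"
  by (simp add: fa_mul_scalar_left)

lemma scalar_central: "scalar c * p = p * scalar c"
  by (rule nc_series_eqI) (simp add: fa_mul_scalar_left fa_mul_scalar_right)

lemma scalar_commute: "p * (scalar c * q) = scalar c * (p * q)"
  by (simp add: mult.assoc[symmetric] scalar_central[of c p])

lemma scalar_add: "scalar (a + b) = scalar a + scalar b"
  by (rule nc_series_eqI) (auto simp: scalar_def fa_add_def)
lemma scalar_mult: "scalar (a * b) = scalar a * scalar b"
  by (rule nc_series_eqI) (auto simp: fa_mul_scalar_left fa_smult_def)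
lemma scalar_mult_scalar: "scalar a * (scalar b * p) = scalar (a * b) * p"
  by (simp add: scalar_mult mult.assoc)
lemma scalar_mult_scalar_mult: "scalar a * p * (scalar b * q) = scalar (a * b) * (p * q)"
  using scalar_commute[of p b q] by (simp add: mult.assoc scalar_mult)
lemma scalar_0 [simp]: "scalar 0 = 0"
  by (rule nc_series_eqI) (auto simp: scalar_def fa_zero_def)
lemma scalar_1 [simp]: "scalar 1 = 1"
  by (rule nc_series_eqI) (auto simp: scalar_def fa_one_def)
lemma scalar_uminus: "scalar (- a) = - scalar a"
  by (rule nc_series_eqI) (auto simp: scalar_def)
lemma scalar_minus_one: "scalar (-1) * p = - p"
  by (simp add: scalar_uminus)

lemma NC_add: "NC (fa_add f g) = NC f + NC g"
  by (rule nc_series_eqI) simp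
lemma NC_sub: "NC (fa_sub f g) = NC f - NC g"
  by (rule nc_series_eqI) simp
lemma NC_mul: "NC (fa_mul f g) = NC f * NC g"
  by (rule nc_series_eqI) simp
lemma NC_zero: "NC fa_zero = 0"
  by (rule nc_series_eqI) simp
lemma NC_one: "NC fa_one = 1"
  by (rule nc_series_eqI) simp
lemma NC_smult: "NC (fa_smult c f) = scalar c * NC f"
  by (rule nc_series_eqI) (simp add: fa_mul_scalar_left)

lemma NC_sum: "NC (fa_sum G A) = (\<Sum>i\<in>A. NC (G i))"
proof (induction A rule: infinite_finite_induct)
  case (infinite A)
  then show ?case by (simp add: fa_sum_def NC_zero[symmetric] fa_zero_def)
next
  case empty
  then show ?case by (simp add: fa_sum_def NC_zero[symmetric] fa_zero_def)
next
  case (insert x F)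
  have "fa_sum G (insert x F) = fa_add (G x) (fa_sum G F)"
    using insert by (simp add: fa_sum_def fa_add_def fun_eq_iff)
  then show ?case using insert by (simp add: NC_add)
qed

definition bracket :: "'a::ring \<Rightarrow> 'a \<Rightarrow> 'a" where
  "bracket p q = p * q - q * p"

lemma NC_fa_br: "NC (fa_br f g) = bracket (NC f) (NC g)"
  by (simp add: fa_br_def bracket_def NC_sub NC_mul)

lemmas NC_simps = NC_add NC_sub NC_mul NC_zero NC_one NC_smult NC_fa_br NC_sum

lemma bracket_add_left: "bracket (a + b) q = bracket a q + bracket b q"
  by (simp add: bracket_def algebra_simps)
lemma bracket_add_right: "bracket p (a + b) = bracket p a + bracket p b"
  by (simp add: bracket_def algebra_simps)
lemma bracket_diff_left: "bracket (a - b) q = bracket a q - bracket b q"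
  by (simp add: bracket_def algebra_simps)
lemma bracket_diff_right: "bracket p (a - b) = bracket p a - bracket p b"
  by (simp add: bracket_def algebra_simps)
lemma bracket_uminus_left: "bracket (- a) q = - bracket a q"
  by (simp add: bracket_def algebra_simps)
lemma bracket_uminus_right: "bracket p (- a) = - bracket p a"
  by (simp add: bracket_def algebra_simps)
lemma bracket_sum_left: "bracket (sum f A) q = (\<Sum>i\<in>A. bracket (f i) q)"
  by (simp add: bracket_def sum_distrib_left sum_distrib_right sum_subtractf)
lemma bracket_sum_right: "bracket p (sum f A) = (\<Sum>i\<in>A. bracket p (f i))"
  by (simp add: bracket_def sum_distrib_left sum_distrib_right sum_subtractf)
lemma bracket_mult_left: "bracket (a * b) q = a * bracket b q + bracket a q * b"
  by (simp add: bracket_def algebra_simps)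
lemma bracket_mult_right: "bracket p (a * b) = bracket p a * b + a * bracket p b"
  by (simp add: bracket_def algebra_simps)
lemma bracket_zero_left: "bracket 0 q = 0"
  by (simp add: bracket_def)
lemma bracket_zero_right: "bracket p 0 = 0"
  by (simp add: bracket_def)
lemma bracket_one_left: "bracket 1 (q :: 'a::ring_1) = 0"
  by (simp add: bracket_def)
lemma bracket_one_right: "bracket (p :: 'a::ring_1) 1 = 0"
  by (simp add: bracket_def)
lemma bracket_self: "bracket p p = 0"
  by (simp add: bracket_def)
lemma bracket_antisym: "bracket p q = - bracket q p"
  by (simp add: bracket_def)
lemma bracket_scalar_left: "bracket (scalar s) q = 0"
  by (simp add: bracket_def scalar_central)
lemma bracket_scalar_right: "bracket p (scalar s) = 0"
  by (simp add: bracket_def scalar_central)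

lemmas bracket_linear = bracket_add_left bracket_add_right bracket_diff_left bracket_diff_right
  bracket_uminus_left bracket_uminus_right bracket_sum_left bracket_sum_right
  bracket_zero_left bracket_zero_right bracket_one_left bracket_one_right
  bracket_scalar_left bracket_scalar_right
lemmas bracket_expand = bracket_linear bracket_mult_left bracket_mult_right

lemma if_zero_mult: "(if P then a else 0) * b = (if P then a * b else (0::'a::mult_zero))"
  by simp
lemma mult_if_zero: "b * (if P then a else 0) = (if P then b * a else (0::'a::mult_zero))"
  by simp
lemma uminus_if_zero: "- (if P then a else 0) = (if P then - a else (0::'a::group_add))"
  by simp
lemma sum_if_zero: "(\<Sum>x\<in>A. if P then f x else 0) = (if P then sum f A else (0::'a::comm_monoid_add))"
  by simp

lemma sum_swap_13:
  "(\<Sum>a\<in>A. \<Sum>g\<in>B. \<Sum>k\<in>C. F a g k) = (\<Sum>k\<in>C. \<Sum>g\<in>B. \<Sum>a\<in>A. F a g k)"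
proof -
  have "(\<Sum>a\<in>A. \<Sum>g\<in>B. \<Sum>k\<in>C. F a g k) = (\<Sum>a\<in>A. \<Sum>k\<in>C. \<Sum>g\<in>B. F a g k)"
    by (intro sum.cong refl sum.swap)
  also have "\<dots> = (\<Sum>k\<in>C. \<Sum>a\<in>A. \<Sum>g\<in>B. F a g k)" by (rule sum.swap)
  also have "\<dots> = (\<Sum>k\<in>C. \<Sum>g\<in>B. \<Sum>a\<in>A. F a g k)" by (intro sum.cong refl sum.swap)
  finally show ?thesis .
qed

lemma sum_remove_swap:
  "finite B \<Longrightarrow> i \<in> B \<Longrightarrow>
    (\<Sum>a\<in>A. f a i) + (\<Sum>j\<in>B - {i}. \<Sum>a\<in>A. f a j) = (\<Sum>a\<in>A. \<Sum>j\<in>B. f a j)"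
proof -
  assume B: "finite B" "i \<in> B"
  have "(\<Sum>a\<in>A. \<Sum>j\<in>B. f a j) = (\<Sum>a\<in>A. f a i + (\<Sum>j\<in>B - {i}. f a j))"
    using B by (intro sum.cong refl) (rule sum.remove)
  also have "\<dots> = (\<Sum>a\<in>A. f a i) + (\<Sum>j\<in>B - {i}. \<Sum>a\<in>A. f a j)"
    by (simp add: sum.distrib sum.swap[of _ "B - {i}" A])
  finally show ?thesis by simp
qed

lemma sum_swap_antisym:
  assumes "\<And>a x. a \<in> A \<Longrightarrow> x \<in> A \<Longrightarrow> k x a = - k a x"
  shows "(\<Sum>a\<in>A. \<Sum>x\<in>A. scalar (k a x) * M x a + scalar (k a x) * M a x) = 0"
proof -
  have "(\<Sum>a\<in>A. \<Sum>x\<in>A. scalar (k a x) * M a x) = (\<Sum>x\<in>A. \<Sum>a\<in>A. scalar (k a x) * M a x)"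
    by (rule sum.swap)
  also have "\<dots> = (\<Sum>x\<in>A. \<Sum>a\<in>A. - (scalar (k x a) * M a x))"
    by (intro sum.cong refl) (metis assms scalar_uminus mult_minus_left)
  finally show ?thesis by (simp add: sum.distrib sum_negf)
qed

lemma sum_swap_antisym3:
  assumes "\<And>a x y. a \<in> A \<Longrightarrow> x \<in> A \<Longrightarrow> y \<in> A \<Longrightarrow> k x y a = - k x a y"
  shows "(\<Sum>a\<in>A. \<Sum>x\<in>A. \<Sum>y\<in>A.
      scalar (k x a y) * (P x * Q y a) + scalar (k x a y) * (P x * Q a y)) = 0"
proof -
  have "(\<Sum>a\<in>A. \<Sum>x\<in>A. \<Sum>y\<in>A. scalar (k x a y) * (P x * Q y a) + scalar (k x a y) * (P x * Q a y))
    = (\<Sum>x\<in>A. \<Sum>a\<in>A. \<Sum>y\<in>A. scalar (k x a y) * (P x * Q y a) + scalar (k x a y) * (P x * Q a y))"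
    by (rule sum.swap)
  also have "\<dots> = 0"
    by (rule sum.neutral, rule ballI, rule sum_swap_antisym) (metis assms)
  finally show ?thesis .
qed

lemma sum_swap_diff: "(\<Sum>a\<in>A. \<Sum>x\<in>A. g a x - g x a) = (0 :: 'a::ab_group_add)"
  by (simp add: sum_subtractf sum.swap[of g])

definition is_poly :: "'v nc_series \<Rightarrow> bool" where
  "is_poly p \<longleftrightarrow> nc_coeff p \<in> fa_fin"

lemma is_poly_NC [simp]: "is_poly (NC f) \<longleftrightarrow> f \<in> fa_fin"
  by (simp add: is_poly_def)

lemma is_poly_add [simp, intro]: "is_poly p \<Longrightarrow> is_poly q \<Longrightarrow> is_poly (p + q)"
proof -
  assume "is_poly p" "is_poly q"
  then have "finite ({w. nc_coeff p w \<noteq> 0} \<union> {w. nc_coeff q w \<noteq> 0})"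
    by (simp add: is_poly_def fa_fin_def)
  moreover have "{w. nc_coeff (p + q) w \<noteq> 0} \<subseteq> {w. nc_coeff p w \<noteq> 0} \<union> {w. nc_coeff q w \<noteq> 0}"
    by (auto simp: fa_add_def)
  ultimately show ?thesis
    unfolding is_poly_def fa_fin_def by (blast intro: finite_subset)
qed

lemma is_poly_uminus [simp, intro]: "is_poly p \<Longrightarrow> is_poly (- p)"
  by (simp add: is_poly_def fa_fin_def)

lemma is_poly_diff [simp, intro]: "is_poly p \<Longrightarrow> is_poly q \<Longrightarrow> is_poly (p - q)"
  unfolding diff_conv_add_uminus by (intro is_poly_add is_poly_uminus)

lemma is_poly_zero [simp, intro]: "is_poly 0"
  by (simp add: is_poly_def fa_fin_def fa_zero_def)
lemma is_poly_one [simp, intro]: "is_poly 1"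
  by (simp add: is_poly_def fa_fin_def fa_one_def)
lemma is_poly_scalar [simp, intro]: "is_poly (scalar c)"
  by (simp add: is_poly_def fa_fin_def)

lemma is_poly_mult [simp, intro]: "is_poly p \<Longrightarrow> is_poly q \<Longrightarrow> is_poly (p * q)"
proof -
  assume polys: "is_poly p" "is_poly q"
  let ?S = "(\<lambda>(u, v). u @ v) ` ({u. nc_coeff p u \<noteq> 0} \<times> {v. nc_coeff q v \<noteq> 0})"
  have "{w. fa_mul (nc_coeff p) (nc_coeff q) w \<noteq> 0} \<subseteq> ?S"
  proof
    fix w assume "w \<in> {w. fa_mul (nc_coeff p) (nc_coeff q) w \<noteq> 0}"
    then obtain k where "nc_coeff p (take k w) * nc_coeff q (drop k w) \<noteq> 0"
      unfolding fa_mul_def by (auto elim: sum.not_neutral_contains_not_neutral)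
    then show "w \<in> ?S" by (auto intro!: image_eqI[of _ _ "(take k w, drop k w)"])
  qed
  moreover have "finite ?S" using polys by (auto simp: is_poly_def fa_fin_def)
  ultimately show ?thesis
    unfolding is_poly_def fa_fin_def using finite_subset by auto
qed

lemma is_poly_sum [simp, intro]: "(\<And>i. i \<in> A \<Longrightarrow> is_poly (f i)) \<Longrightarrow> is_poly (sum f A)"
  by (induction A rule: infinite_finite_induct) auto

lemma is_poly_bracket [simp, intro]: "is_poly p \<Longrightarrow> is_poly q \<Longrightarrow> is_poly (bracket p q)"
  by (simp add: bracket_def)

lemma is_poly_if: "is_poly a \<Longrightarrow> is_poly b \<Longrightarrow> is_poly (if P then a else b)"
  by simp

lemma fa_gen_fin [simp]: "fa_gen v \<in> fa_fin"
  by (simp add: fa_fin_def fa_gen_def)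

lemma fa_fin_zero: "fa_zero \<in> fa_fin"
  using is_poly_zero by (simp add: is_poly_def)
lemma fa_fin_one: "fa_one \<in> fa_fin"
  using is_poly_one by (simp add: is_poly_def)
lemma fa_fin_add: "f \<in> fa_fin \<Longrightarrow> g \<in> fa_fin \<Longrightarrow> fa_add f g \<in> fa_fin"
  using is_poly_add[of "NC f" "NC g"] by (simp add: is_poly_def)
lemma fa_fin_sub: "f \<in> fa_fin \<Longrightarrow> g \<in> fa_fin \<Longrightarrow> fa_sub f g \<in> fa_fin"
  using is_poly_diff[of "NC f" "NC g"] by (simp add: is_poly_def)
lemma fa_fin_mul: "f \<in> fa_fin \<Longrightarrow> g \<in> fa_fin \<Longrightarrow> fa_mul f g \<in> fa_fin"
  using is_poly_mult[of "NC f" "NC g"] by (simp add: is_poly_def)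
lemma fa_fin_smult: "f \<in> fa_fin \<Longrightarrow> fa_smult c f \<in> fa_fin"
  using is_poly_mult[of "scalar c" "NC f"] is_poly_scalar[of c] by (simp add: fa_mul_scalar_left is_poly_def)
lemma fa_fin_br: "f \<in> fa_fin \<Longrightarrow> g \<in> fa_fin \<Longrightarrow> fa_br f g \<in> fa_fin"
  by (simp add: fa_br_def fa_fin_sub fa_fin_mul)
lemma fa_fin_sum: "(\<And>i. i \<in> A \<Longrightarrow> F i \<in> fa_fin) \<Longrightarrow> fa_sum F A \<in> fa_fin"
  using is_poly_sum[of A "\<lambda>i. NC (F i)"] by (simp add: NC_sum[symmetric])

lemma fa_subspace_fa_fin: "fa_subspace fa_fin"
  by (simp add: fa_subspace_def fa_fin_add fa_fin_smult fa_fin_zero)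

lemma fa_subspace_Inter:
  "\<F> \<noteq> {} \<Longrightarrow> (\<And>I. I \<in> \<F> \<Longrightarrow> fa_subspace I) \<Longrightarrow> fa_subspace (\<Inter>\<F>)"
  unfolding fa_subspace_def by blast

lemma two_sided_ideal_ideal_gen: "S \<subseteq> fa_fin \<Longrightarrow> two_sided_ideal (ideal_gen S)"
proof -
  assume "S \<subseteq> fa_fin"
  then have "fa_fin \<in> {I. two_sided_ideal I \<and> S \<subseteq> I}"
    by (simp add: two_sided_ideal_def fa_subspace_fa_fin fa_fin_mul)
  then show ?thesis
    unfolding ideal_gen_def two_sided_ideal_def
    by (intro conjI fa_subspace_Inter) (auto simp: two_sided_ideal_def)
qed

lemma ideal_gen_upper: "S \<subseteq> ideal_gen S"
  unfolding ideal_gen_def by blast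

lemma left_ideal_left_ideal_gen: "S \<subseteq> fa_fin \<Longrightarrow> left_ideal (left_ideal_gen S)"
proof -
  assume "S \<subseteq> fa_fin"
  then have "fa_fin \<in> {I. left_ideal I \<and> S \<subseteq> I}"
    by (simp add: left_ideal_def fa_subspace_fa_fin fa_fin_mul)
  then show ?thesis
    unfolding left_ideal_gen_def left_ideal_def
    by (intro conjI fa_subspace_Inter) (auto simp: left_ideal_def)
qed

lemma left_ideal_gen_upper: "S \<subseteq> left_ideal_gen S"
  unfolding left_ideal_gen_def by blast
lemma left_ideal_gen_least: "left_ideal I \<Longrightarrow> S \<subseteq> I \<Longrightarrow> left_ideal_gen S \<subseteq> I"
  unfolding left_ideal_gen_def by blast

lemma lie_sub_lie_sub_gen: "S \<subseteq> fa_fin \<Longrightarrow> lie_sub (lie_sub_gen S)"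
proof -
  assume "S \<subseteq> fa_fin"
  then have "fa_fin \<in> {K. lie_sub K \<and> S \<subseteq> K}"
    by (simp add: lie_sub_def fa_subspace_fa_fin fa_fin_br)
  then show ?thesis
    unfolding lie_sub_gen_def lie_sub_def
    by (intro conjI fa_subspace_Inter) (auto simp: lie_sub_def)
qed

lemma lie_sub_gen_upper: "S \<subseteq> lie_sub_gen S"
  unfolding lie_sub_gen_def by blast
lemma lie_sub_gen_least: "lie_sub K \<Longrightarrow> S \<subseteq> K \<Longrightarrow> lie_sub_gen S \<subseteq> K"
  unfolding lie_sub_gen_def by blast

lemma lie_ideal_in_lie_ideal_gen: "lie_sub L \<Longrightarrow> S \<subseteq> L \<Longrightarrow> lie_ideal_in L (lie_ideal_gen L S)"
  unfolding lie_ideal_gen_def lie_ideal_in_def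
  by (intro conjI fa_subspace_Inter) (auto simp: lie_sub_def)

lemma lie_ideal_gen_least: "lie_ideal_in L K \<Longrightarrow> S \<subseteq> K \<Longrightarrow> lie_ideal_gen L S \<subseteq> K"
  unfolding lie_ideal_gen_def by blast

definition nc_mem :: "'v nc_series \<Rightarrow> 'v fa set \<Rightarrow> bool" where
  "nc_mem p I \<longleftrightarrow> nc_coeff p \<in> I"

lemma nc_mem_NC [simp]: "nc_mem (NC f) I \<longleftrightarrow> f \<in> I"
  by (simp add: nc_mem_def)

context
  fixes I :: "'v fa set"
  assumes I: "fa_subspace I"
begin

lemma nc_mem_zero: "nc_mem 0 I"
  using I by (simp add: nc_mem_def fa_subspace_def)
lemma nc_mem_add: "nc_mem p I \<Longrightarrow> nc_mem q I \<Longrightarrow> nc_mem (p + q) I"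
  using I by (simp add: nc_mem_def fa_subspace_def)
lemma nc_mem_scalar_mult: "nc_mem p I \<Longrightarrow> nc_mem (scalar s * p) I"
  using I by (simp add: nc_mem_def fa_subspace_def fa_mul_scalar_left)
lemma nc_mem_uminus: "nc_mem p I \<Longrightarrow> nc_mem (- p) I"
  using nc_mem_scalar_mult[of p "-1"] by (simp add: scalar_uminus)
lemma nc_mem_diff: "nc_mem p I \<Longrightarrow> nc_mem q I \<Longrightarrow> nc_mem (p - q) I"
  unfolding diff_conv_add_uminus by (intro nc_mem_add nc_mem_uminus)
lemma nc_mem_sum: "(\<And>i. i \<in> A \<Longrightarrow> nc_mem (f i) I) \<Longrightarrow> nc_mem (sum f A) I"
  by (induction A rule: infinite_finite_induct) (auto intro: nc_mem_add nc_mem_zero)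
lemma nc_mem_is_poly: "nc_mem p I \<Longrightarrow> is_poly p"
  using I by (auto simp: fa_subspace_def nc_mem_def is_poly_def)

lemma fa_subspace_sub: "x \<in> I \<Longrightarrow> y \<in> I \<Longrightarrow> fa_sub x y \<in> I"
  using nc_mem_diff[of "NC x" "NC y"] by (simp add: NC_sub[symmetric])
lemma fa_subspace_sum: "(\<And>i. i \<in> A \<Longrightarrow> F i \<in> I) \<Longrightarrow> fa_sum F A \<in> I"
  using nc_mem_sum[of A "\<lambda>i. NC (F i)"] by (simp add: NC_sum[symmetric])

end

lemma nc_mem_mult_left: "left_ideal I \<Longrightarrow> is_poly a \<Longrightarrow> nc_mem p I \<Longrightarrow> nc_mem (a * p) I"
  by (simp add: left_ideal_def nc_mem_def is_poly_def)

lemma left_ideal_if_two_sided_ideal: "two_sided_ideal I \<Longrightarrow> left_ideal I"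
  by (simp add: two_sided_ideal_def left_ideal_def)

lemma nc_mem_mult_right: "two_sided_ideal I \<Longrightarrow> is_poly a \<Longrightarrow> nc_mem p I \<Longrightarrow> nc_mem (p * a) I"
  by (simp add: two_sided_ideal_def nc_mem_def is_poly_def)

definition word_eval :: "('v \<Rightarrow> 'w nc_series) \<Rightarrow> 'v list \<Rightarrow> 'w nc_series" where
  "word_eval g w = foldr (\<lambda>v acc. g v * acc) w 1"

definition nc_eval :: "('v \<Rightarrow> 'w nc_series) \<Rightarrow> 'v fa \<Rightarrow> 'w nc_series" where
  "nc_eval g f = (\<Sum>w\<in>{w. f w \<noteq> 0}. scalar (f w) * word_eval g w)"

definition nc_monom :: "'v list \<Rightarrow> 'v nc_series" where
  "nc_monom u = NC (\<lambda>w. if w = u then 1 else 0)"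

lemma word_eval_append: "word_eval g (u @ v) = word_eval g u * word_eval g v"
  by (induction u) (auto simp: word_eval_def mult.assoc)

lemma is_poly_word_eval: "(\<And>v. is_poly (g v)) \<Longrightarrow> is_poly (word_eval g w)"
  by (induction w) (auto simp: word_eval_def)

lemma is_poly_nc_eval: "(\<And>v. is_poly (g v)) \<Longrightarrow> is_poly (nc_eval g f)"
  by (simp add: nc_eval_def is_poly_word_eval)

lemma nc_eval_superset:
  "finite S \<Longrightarrow> {w. f w \<noteq> 0} \<subseteq> S \<Longrightarrow> nc_eval g f = (\<Sum>w\<in>S. scalar (f w) * word_eval g w)"
  unfolding nc_eval_def by (rule sum.mono_neutral_left) auto

lemma nc_eval_zero: "nc_eval g fa_zero = 0"
  by (simp add: nc_eval_def fa_zero_def)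

lemma nc_eval_gen: "nc_eval g (fa_gen v) = g v"
proof -
  have "{w. fa_gen v w \<noteq> 0} = {[v]}" by (auto simp: fa_gen_def)
  then show ?thesis by (simp add: nc_eval_def fa_gen_def word_eval_def)
qed

lemma nc_eval_nc_monom: "nc_eval g (nc_coeff (nc_monom u)) = word_eval g u"
proof -
  have "{w. nc_coeff (nc_monom u) w \<noteq> 0} = {u}" by (auto simp: nc_monom_def)
  then show ?thesis by (simp add: nc_eval_def nc_monom_def)
qed

lemma nc_eval_add:
  "f \<in> fa_fin \<Longrightarrow> h \<in> fa_fin \<Longrightarrow> nc_eval g (fa_add f h) = nc_eval g f + nc_eval g h"
proof -
  assume "f \<in> fa_fin" "h \<in> fa_fin"
  then have S: "finite ({w. f w \<noteq> 0} \<union> {w. h w \<noteq> 0})" by (simp add: fa_fin_def)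
  have "{w. fa_add f h w \<noteq> 0} \<subseteq> {w. f w \<noteq> 0} \<union> {w. h w \<noteq> 0}" by (auto simp: fa_add_def)
  then show ?thesis
    using nc_eval_superset[OF S, of "fa_add f h" g] nc_eval_superset[OF S, of f g]
      nc_eval_superset[OF S, of h g]
    by (auto simp: fa_add_def scalar_add distrib_right sum.distrib)
qed

lemma nc_eval_smult: "nc_eval g (fa_smult s f) = scalar s * nc_eval g f"
proof (cases "s = 0")
  case True
  then show ?thesis by (simp add: nc_eval_def fa_smult_def)
next
  case False
  then have "{w. fa_smult s f w \<noteq> 0} = {w. f w \<noteq> 0}" by (auto simp: fa_smult_def)
  then show ?thesis by (simp add: nc_eval_def fa_smult_def sum_distrib_left scalar_mult mult.assoc)
qed

lemma nc_eval_sub: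
  "f \<in> fa_fin \<Longrightarrow> h \<in> fa_fin \<Longrightarrow> nc_eval g (fa_sub f h) = nc_eval g f - nc_eval g h"
proof -
  assume f: "f \<in> fa_fin" and h: "h \<in> fa_fin"
  have "fa_sub f h = fa_add f (fa_smult (-1) h)"
    by (simp add: fa_sub_def fa_add_def fa_smult_def fun_eq_iff)
  then show ?thesis
    using f h fa_fin_smult[OF h] by (simp add: nc_eval_add nc_eval_smult scalar_uminus)
qed

lemma nc_eval_sum:
  "(\<And>i. i \<in> A \<Longrightarrow> is_poly (p i)) \<Longrightarrow>
    nc_eval g (nc_coeff (sum p A)) = (\<Sum>i\<in>A. nc_eval g (nc_coeff (p i)))"
  by (induction A rule: infinite_finite_induct)
    (simp_all add: nc_eval_zero nc_eval_add is_poly_def[symmetric])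

lemma nc_eval_fa_sum:
  "(\<And>i. i \<in> A \<Longrightarrow> F i \<in> fa_fin) \<Longrightarrow> nc_eval g (fa_sum F A) = (\<Sum>i\<in>A. nc_eval g (F i))"
  using nc_eval_sum[of A "\<lambda>i. NC (F i)" g] by (simp add: NC_sum[symmetric])

lemma nc_coeff_sum: "nc_coeff (sum p A) w = (\<Sum>i\<in>A. nc_coeff (p i) w)"
  by (induction A rule: infinite_finite_induct) (auto simp: fa_add_def fa_zero_def)

lemma NC_monom_expansion: "f \<in> fa_fin \<Longrightarrow> NC f = (\<Sum>u\<in>{u. f u \<noteq> 0}. scalar (f u) * nc_monom u)"
proof (rule nc_series_eqI, rule ext)
  fix w assume f: "f \<in> fa_fin"
  have "nc_coeff (\<Sum>u\<in>{u. f u \<noteq> 0}. scalar (f u) * nc_monom u) w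
      = (\<Sum>u\<in>{u. f u \<noteq> 0}. f u * (if w = u then 1 else 0))"
    by (simp add: nc_coeff_sum fa_mul_scalar_left nc_monom_def fa_smult_def)
  also have "\<dots> = f w"
    using f by (simp add: fa_fin_def if_distrib[of "\<lambda>x. _ * x"] sum.delta cong: if_cong)
  finally show "nc_coeff (NC f) w = nc_coeff (\<Sum>u\<in>{u. f u \<noteq> 0}. scalar (f u) * nc_monom u) w"
    by simp
qed

lemma is_poly_nc_monom [simp]: "is_poly (nc_monom u)"
  by (simp add: nc_monom_def fa_fin_def)

lemma nc_monom_mult: "nc_monom u * nc_monom v = nc_monom (u @ v)"
proof (rule nc_series_eqI, rule ext)
  fix w
  have "fa_mul (\<lambda>w. if w = u then 1 else 0) (\<lambda>w. if w = v then 1 else 0) w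
      = (\<Sum>k\<le>length w. if k = length u \<and> w = u @ v then 1 else 0)"
    unfolding fa_mul_def
  proof (intro sum.cong refl)
    fix k assume k: "k \<in> {..length w}"
    have "(take k w = u \<and> drop k w = v) \<longleftrightarrow> (k = length u \<and> w = u @ v)"
    proof
      assume split: "take k w = u \<and> drop k w = v"
      then have "length u = k" using k by auto
      moreover have "w = u @ v" using split append_take_drop_id[of k w] by simp
      ultimately show "k = length u \<and> w = u @ v" by simp
    qed simp
    then show "(if take k w = u then 1 else 0) * (if drop k w = v then 1 else 0)
        = (if k = length u \<and> w = u @ v then 1 else (0::complex))"
      by auto
  qed
  also have "\<dots> = (if w = u @ v then 1 else 0)"
    by (auto simp: sum.delta)
  finally show "nc_coeff (nc_monom u * nc_monom v) w = nc_coeff (nc_monom (u @ v)) w"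
    by (simp add: nc_monom_def)
qed

lemma nc_eval_mul:
  "f \<in> fa_fin \<Longrightarrow> h \<in> fa_fin \<Longrightarrow> nc_eval g (fa_mul f h) = nc_eval g f * nc_eval g h"
proof -
  assume f: "f \<in> fa_fin" and h: "h \<in> fa_fin"
  let ?A = "{u. f u \<noteq> 0}" and ?B = "{v. h v \<noteq> 0}"
  have "NC (fa_mul f h) = NC f * NC h" by (simp add: NC_mul)
  also have "\<dots> = (\<Sum>v\<in>?B. \<Sum>u\<in>?A. scalar (f u * h v) * nc_monom (u @ v))"
    unfolding NC_monom_expansion[OF f] NC_monom_expansion[OF h] sum_distrib_left sum_distrib_right
    by (intro sum.cong refl) (simp add: scalar_mult_scalar_mult nc_monom_mult)
  finally have expansion:
    "fa_mul f h = nc_coeff (\<Sum>v\<in>?B. \<Sum>u\<in>?A. scalar (f u * h v) * nc_monom (u @ v))"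
    by (metis nc_series.sel)
  have "nc_eval g (fa_mul f h)
      = (\<Sum>v\<in>?B. \<Sum>u\<in>?A. nc_eval g (nc_coeff (scalar (f u * h v) * nc_monom (u @ v))))"
    unfolding expansion by (simp add: nc_eval_sum)
  also have "\<dots> = (\<Sum>v\<in>?B. \<Sum>u\<in>?A. scalar (f u) * word_eval g u * (scalar (h v) * word_eval g v))"
    by (intro sum.cong refl)
      (simp add: nc_coeff_scalar_mul nc_eval_smult nc_eval_nc_monom word_eval_append scalar_mult_scalar_mult
        del: nc_coeff_mul)
  also have "\<dots> = nc_eval g f * nc_eval g h"
    by (simp add: nc_eval_def sum_distrib_left sum_distrib_right)
  finally show ?thesis .
qed

lemma nc_eval_br:
  "f \<in> fa_fin \<Longrightarrow> h \<in> fa_fin \<Longrightarrow> nc_eval g (fa_br f h) = bracket (nc_eval g f) (nc_eval g h)"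
  by (simp add: fa_br_def nc_eval_sub nc_eval_mul fa_fin_mul bracket_def)

lemma lie_sub_tL: "lie_sub (tL n)"
  unfolding tL_def by (rule lie_sub_lie_sub_gen) auto

lemma fa_subspace_tL: "fa_subspace (tL n)"
  using lie_sub_tL by (simp add: lie_sub_def)

lemma tL_subset_fa_fin: "u \<in> tL n \<Longrightarrow> u \<in> fa_fin"
  using fa_subspace_tL[of n] by (auto simp: fa_subspace_def)

lemma tL_least: "lie_sub K \<Longrightarrow> fa_gen ` t_gens n \<subseteq> K \<Longrightarrow> tL n \<subseteq> K"
  unfolding tL_def by (rule lie_sub_gen_least)

lemma fa_gen_in_tL: "v \<in> t_gens n \<Longrightarrow> fa_gen v \<in> tL n"
  using lie_sub_gen_upper[of "fa_gen ` t_gens n"] unfolding tL_def by auto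

lemma tL_zero: "fa_zero \<in> tL n"
  using fa_subspace_tL by (simp add: fa_subspace_def)
lemma tL_add: "x \<in> tL n \<Longrightarrow> y \<in> tL n \<Longrightarrow> fa_add x y \<in> tL n"
  using fa_subspace_tL by (simp add: fa_subspace_def)
lemma tL_smult: "x \<in> tL n \<Longrightarrow> fa_smult s x \<in> tL n"
  using fa_subspace_tL by (simp add: fa_subspace_def)
lemma tL_br: "x \<in> tL n \<Longrightarrow> y \<in> tL n \<Longrightarrow> fa_br x y \<in> tL n"
  using lie_sub_tL by (simp add: lie_sub_def)

lemma tx_in_tL: "i \<in> {1..n} \<Longrightarrow> tx i \<in> tL n"
  by (rule fa_gen_in_tL) (auto simp: t_gens_def)
lemma ty_in_tL: "i \<in> {1..n} \<Longrightarrow> ty i \<in> tL n"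
  by (rule fa_gen_in_tL) (auto simp: t_gens_def)
lemma tt_in_tL: "i \<in> {1..n} \<Longrightarrow> j \<in> {1..n} \<Longrightarrow> i \<noteq> j \<Longrightarrow> tt i j \<in> tL n"
  by (rule fa_gen_in_tL) (auto simp: t_gens_def)

lemma t_rels_subset_tL: "t_rels n \<subseteq> tL n"
proof -
  have sums: "fa_sum tx {1..n} \<in> tL n" "fa_sum ty {1..n} \<in> tL n"
    by (auto intro!: fa_subspace_sum[OF fa_subspace_tL] tx_in_tL ty_in_tL)
  show ?thesis
    unfolding t_rels_def
    by (intro Un_least)
      (auto intro!: fa_subspace_sub[OF fa_subspace_tL] fa_subspace_sum[OF fa_subspace_tL]
        tL_br tL_add tx_in_tL ty_in_tL tt_in_tL sums)
qed

lemma lie_ideal_in_tR: "lie_ideal_in (tL n) (tR n)"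
  unfolding tR_def by (rule lie_ideal_in_lie_ideal_gen[OF lie_sub_tL t_rels_subset_tL])

lemma tR_least: "lie_ideal_in (tL n) K \<Longrightarrow> t_rels n \<subseteq> K \<Longrightarrow> tR n \<subseteq> K"
  unfolding tR_def by (rule lie_ideal_gen_least)

lemma cosT_self: "u \<in> cosT n u"
proof -
  have "fa_zero \<in> tR n" using lie_ideal_in_tR by (simp add: lie_ideal_in_def fa_subspace_def)
  moreover have "fa_add u fa_zero = u" by (simp add: fa_add_def fa_zero_def)
  ultimately show ?thesis unfolding cosT_def by force
qed

lemma cosT_eq_imp_diff_in_tR: "cosT n u = cosT n v \<Longrightarrow> fa_sub u v \<in> tR n"
proof -
  assume "cosT n u = cosT n v"
  then obtain r where "r \<in> tR n" "u = fa_add v r"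
    using cosT_self[of u n] unfolding cosT_def by blast
  moreover from this have "fa_sub u v = r"
    by (simp add: fa_add_def fa_sub_def fun_eq_iff)
  ultimately show ?thesis by simp
qed

section \<open>The algebra A_n and the Hecke algebra\<close>

definition x_gen :: "nat \<Rightarrow> agen nc_series" where
  "x_gen a = NC (fa_gen (Xg a))"
definition d_gen :: "nat \<Rightarrow> agen nc_series" where
  "d_gen a = NC (fa_gen (Dg a))"
definition e_gen :: "nat \<Rightarrow> nat \<Rightarrow> agen nc_series" where
  "e_gen a i = NC (fa_gen (Eg a i))"

lemma is_poly_x_gen [simp, intro]: "is_poly (x_gen a)"
  by (simp add: x_gen_def)
lemma is_poly_d_gen [simp, intro]: "is_poly (d_gen a)"
  by (simp add: d_gen_def)
lemma is_poly_e_gen [simp, intro]: "is_poly (e_gen a i)"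
  by (simp add: e_gen_def)

locale quadratic_lie_data =
  fixes d n :: nat and c :: "nat \<Rightarrow> nat \<Rightarrow> nat \<Rightarrow> complex"
  assumes quadratic: "quadratic_lie d c"
begin

lemma c_antisym: "a < d \<Longrightarrow> b < d \<Longrightarrow> k < d \<Longrightarrow> c a b k = - c b a k"
proof -
  have "\<forall>a<d. \<forall>b<d. \<forall>k<d. c a b k = - c b a k"
    using quadratic unfolding quadratic_lie_def by (elim conjE)
  then show "a < d \<Longrightarrow> b < d \<Longrightarrow> k < d \<Longrightarrow> c a b k = - c b a k" by metis
qed

lemma c_cyclic: "a < d \<Longrightarrow> b < d \<Longrightarrow> k < d \<Longrightarrow> c a b k = c b k a"
proof -
  have "\<forall>a<d. \<forall>b<d. \<forall>k<d. c a b k = c b k a"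
    using quadratic unfolding quadratic_lie_def by (elim conjE)
  then show "a < d \<Longrightarrow> b < d \<Longrightarrow> k < d \<Longrightarrow> c a b k = c b k a" by metis
qed

lemma c_antisym_23: "a < d \<Longrightarrow> b < d \<Longrightarrow> k < d \<Longrightarrow> c a b k = - c a k b"
proof -
  assume abk: "a < d" "b < d" "k < d"
  have "c a b k = c b k a" using abk by (rule c_cyclic)
  also have "\<dots> = - c k b a" using abk by (intro c_antisym)
  also have "c k b a = c a k b" using abk by (intro c_cyclic[symmetric])
  finally show ?thesis .
qed

lemma c_diag: "a < d \<Longrightarrow> b < d \<Longrightarrow> c a b a = 0"
  using c_antisym_23[of a b a] c_antisym[of a a b] by (simp only: minus_equation_iff) simp

text \<open>Y \<beta> is Y_a for a = e_\<beta>; here x_{[e_\<beta>, e_\<alpha>]} = sum_k c \<beta> \<alpha> k x_k.\<close>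

definition Y :: "nat \<Rightarrow> agen nc_series" where
  "Y \<beta> = (\<Sum>\<alpha><d. \<Sum>k<d. scalar (c \<beta> \<alpha> k) * (x_gen k * d_gen \<alpha>)) + (\<Sum>i\<in>{1..n}. e_gen \<beta> i)"

lemma is_poly_Y [simp, intro]: "is_poly (Y \<beta>)"
  by (simp add: Y_def)

lemma NC_Yel: "NC (Yel d c n a) = (\<Sum>\<beta><d. scalar (a \<beta>) * Y \<beta>)"
proof -
  have "NC (Yel d c n a)
      = (\<Sum>\<alpha><d. \<Sum>\<beta><d. \<Sum>k<d. scalar (a \<beta>) * (scalar (c \<beta> \<alpha> k) * (x_gen k * d_gen \<alpha>)))
        + (\<Sum>i\<in>{1..n}. \<Sum>\<beta><d. scalar (a \<beta>) * e_gen \<beta> i)"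
    by (simp add: Yel_def NC_simps x_gen_def d_gen_def e_gen_def scalar_mult mult.assoc)
  also have "\<dots> = (\<Sum>\<beta><d. scalar (a \<beta>) * Y \<beta>)"
    unfolding Y_def distrib_left sum.distrib sum_distrib_left
    by (subst sum.swap, subst (2) sum.swap) simp
  finally show ?thesis .
qed

lemma Y_eq_Yel: "\<beta> < d \<Longrightarrow> Y \<beta> = NC (Yel d c n (\<lambda>\<gamma>. if \<gamma> = \<beta> then 1 else 0))"
  by (simp add: NC_Yel if_distrib[of scalar] if_distrib[of "\<lambda>x. x * _"] cong: if_cong)

lemma An_rels_subset_fa_fin: "An_rels d c n \<subseteq> fa_fin"
proof -
  have "(if a = b then fa_one else fa_zero :: agen fa) \<in> fa_fin" for a b :: nat
    by (simp add: fa_fin_one fa_fin_zero)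
  moreover have "fa_sum (\<lambda>k. fa_smult (c a b k) (fa_gen (Eg k i))) {..<d} \<in> fa_fin" for a b i
    by (intro fa_fin_sum fa_fin_smult fa_gen_fin)
  ultimately show ?thesis
    unfolding An_rels_def by (intro Un_least; clarify; intro fa_fin_br fa_fin_sub fa_gen_fin)
qed

abbreviation Irel :: "agen fa set" where
  "Irel \<equiv> ideal_gen (An_rels d c n)"

abbreviation in_I :: "agen nc_series \<Rightarrow> bool" where
  "in_I p \<equiv> nc_mem p Irel"

lemma two_sided_ideal_Irel: "two_sided_ideal Irel"
  by (rule two_sided_ideal_ideal_gen[OF An_rels_subset_fa_fin])

lemma fa_subspace_Irel: "fa_subspace Irel"
  using two_sided_ideal_Irel by (simp add: two_sided_ideal_def)

lemmas in_I_zero = nc_mem_zero[OF fa_subspace_Irel]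
lemmas in_I_add = nc_mem_add[OF fa_subspace_Irel]
lemmas in_I_diff = nc_mem_diff[OF fa_subspace_Irel]
lemmas in_I_uminus = nc_mem_uminus[OF fa_subspace_Irel]
lemmas in_I_scalar_mult = nc_mem_scalar_mult[OF fa_subspace_Irel]
lemmas in_I_sum = nc_mem_sum[OF fa_subspace_Irel]
lemmas in_I_mult_left = nc_mem_mult_left[OF left_ideal_if_two_sided_ideal[OF two_sided_ideal_Irel]]
lemmas in_I_mult_right = nc_mem_mult_right[OF two_sided_ideal_Irel]

lemma in_I_half: "in_I (p + p) \<Longrightarrow> in_I p"
proof -
  assume "in_I (p + p)"
  then have "in_I (scalar (1/2) * (p + p))" by (rule in_I_scalar_mult)
  moreover have "scalar (1/2) * (p + p) = (scalar (1/2) + scalar (1/2)) * p"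
    by (simp add: algebra_simps)
  moreover have "scalar (1/2) + scalar (1/2) = (1 :: agen nc_series)"
    by (simp add: scalar_add[symmetric])
  ultimately show ?thesis by simp
qed

definition congI :: "agen nc_series \<Rightarrow> agen nc_series \<Rightarrow> bool" (infix "\<doteq>" 50) where
  "p \<doteq> q \<longleftrightarrow> in_I (p - q)"

lemma congI_refl: "p \<doteq> p"
  by (simp add: congI_def in_I_zero)
lemma congI_add: "a \<doteq> a' \<Longrightarrow> b \<doteq> b' \<Longrightarrow> a + b \<doteq> a' + b'"
  unfolding congI_def by (drule (1) in_I_add) (simp add: algebra_simps)
lemma congI_diff: "a \<doteq> a' \<Longrightarrow> b \<doteq> b' \<Longrightarrow> a - b \<doteq> a' - b'"
  unfolding congI_def by (drule (1) in_I_diff) (simp add: algebra_simps)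
lemma congI_uminus: "a \<doteq> a' \<Longrightarrow> - a \<doteq> - a'"
  unfolding congI_def by (drule in_I_uminus) (simp add: algebra_simps)
lemma congI_sum: "(\<And>i. i \<in> A \<Longrightarrow> f i \<doteq> g i) \<Longrightarrow> sum f A \<doteq> sum g A"
  unfolding congI_def by (drule in_I_sum) (simp add: sum_subtractf)
lemma congI_mult: "a \<doteq> a' \<Longrightarrow> b \<doteq> b' \<Longrightarrow> is_poly b \<Longrightarrow> is_poly a' \<Longrightarrow> a * b \<doteq> a' * b'"
proof -
  assume "a \<doteq> a'" "b \<doteq> b'" "is_poly b" "is_poly a'"
  then have "in_I ((a - a') * b + a' * (b - b'))"
    by (intro in_I_add in_I_mult_left in_I_mult_right) (auto simp: congI_def)
  then show ?thesis by (simp add: congI_def algebra_simps)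
qed
lemma in_I_if_congI_zero: "p \<doteq> q \<Longrightarrow> q = 0 \<Longrightarrow> in_I p"
  by (simp add: congI_def)

lemma An_rel_congI: "r \<in> An_rels d c n \<Longrightarrow> NC r = p - q \<Longrightarrow> p \<doteq> q"
  using ideal_gen_upper[of "An_rels d c n"] unfolding congI_def by (metis nc_mem_NC subsetD)

lemma bracket_x_x: "a \<in> {..<d} \<Longrightarrow> b \<in> {..<d} \<Longrightarrow> bracket (x_gen a) (x_gen b) \<doteq> 0"
  by (rule An_rel_congI[of "fa_br (fa_gen (Xg a)) (fa_gen (Xg b))"])
    (unfold An_rels_def, blast, simp add: NC_fa_br x_gen_def)
lemma bracket_d_d: "a \<in> {..<d} \<Longrightarrow> b \<in> {..<d} \<Longrightarrow> bracket (d_gen a) (d_gen b) \<doteq> 0"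
  by (rule An_rel_congI[of "fa_br (fa_gen (Dg a)) (fa_gen (Dg b))"])
    (unfold An_rels_def, blast, simp add: NC_fa_br d_gen_def)
lemma bracket_d_x:
  "a \<in> {..<d} \<Longrightarrow> b \<in> {..<d} \<Longrightarrow> bracket (d_gen a) (x_gen b) \<doteq> (if a = b then 1 else 0)"
  by (rule An_rel_congI[of
        "fa_sub (fa_br (fa_gen (Dg a)) (fa_gen (Xg b))) (if a = b then fa_one else fa_zero)"])
    (unfold An_rels_def, blast, simp add: NC_sub NC_fa_br d_gen_def x_gen_def NC_one NC_zero)
lemma bracket_x_e: "a \<in> {..<d} \<Longrightarrow> b \<in> {..<d} \<Longrightarrow> i \<in> {1..n} \<Longrightarrow> bracket (x_gen a) (e_gen b i) \<doteq> 0"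
  by (rule An_rel_congI[of "fa_br (fa_gen (Xg a)) (fa_gen (Eg b i))"])
    (unfold An_rels_def, blast, simp add: NC_fa_br x_gen_def e_gen_def)
lemma bracket_d_e: "a \<in> {..<d} \<Longrightarrow> b \<in> {..<d} \<Longrightarrow> i \<in> {1..n} \<Longrightarrow> bracket (d_gen a) (e_gen b i) \<doteq> 0"
  by (rule An_rel_congI[of "fa_br (fa_gen (Dg a)) (fa_gen (Eg b i))"])
    (unfold An_rels_def, blast, simp add: NC_fa_br d_gen_def e_gen_def)
lemma bracket_e_e_same:
  "a \<in> {..<d} \<Longrightarrow> b \<in> {..<d} \<Longrightarrow> i \<in> {1..n} \<Longrightarrow>
    bracket (e_gen a i) (e_gen b i) \<doteq> (\<Sum>k<d. scalar (c a b k) * e_gen k i)"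
  by (rule An_rel_congI[of "fa_sub (fa_br (fa_gen (Eg a i)) (fa_gen (Eg b i)))
        (fa_sum (\<lambda>k. fa_smult (c a b k) (fa_gen (Eg k i))) {..<d})"])
    (unfold An_rels_def, blast, simp add: NC_sub NC_fa_br NC_sum NC_smult e_gen_def)
lemma bracket_e_e_distinct:
  "a \<in> {..<d} \<Longrightarrow> b \<in> {..<d} \<Longrightarrow> i \<in> {1..n} \<Longrightarrow> j \<in> {1..n} \<Longrightarrow> i \<noteq> j \<Longrightarrow>
    bracket (e_gen a i) (e_gen b j) \<doteq> 0"
  by (rule An_rel_congI[of "fa_br (fa_gen (Eg a i)) (fa_gen (Eg b j))"])
    (unfold An_rels_def, blast, simp add: NC_fa_br e_gen_def)

lemma congI_antisym: "bracket p q \<doteq> r \<Longrightarrow> bracket q p \<doteq> - r"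
  using congI_uminus[of "bracket p q" r] by (simp add: bracket_antisym[of q p])

lemma bracket_e_e:
  "a \<in> {..<d} \<Longrightarrow> b \<in> {..<d} \<Longrightarrow> i \<in> {1..n} \<Longrightarrow> j \<in> {1..n} \<Longrightarrow>
    bracket (e_gen a i) (e_gen b j) \<doteq> (if i = j then (\<Sum>k<d. scalar (c a b k) * e_gen k i) else 0)"
  by (cases "i = j") (simp_all add: bracket_e_e_same bracket_e_e_distinct)

text \<open>
  Applied repeatedly to an expanded expression, these rules replace every bracket of two
  generators by its value modulo the relations; the order matters, since congI_refl, tried last,
  must only fire on the remaining leaves.
\<close>

lemmas congI_reduce =
  bracket_x_x bracket_d_d bracket_d_x bracket_x_e bracket_d_e bracket_e_e
  congI_antisym[OF bracket_d_x] congI_antisym[OF bracket_x_e] congI_antisym[OF bracket_d_e]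
  congI_add congI_diff congI_uminus congI_sum congI_mult congI_refl
  is_poly_add is_poly_diff is_poly_uminus is_poly_mult is_poly_sum is_poly_x_gen is_poly_d_gen
  is_poly_e_gen is_poly_scalar is_poly_zero is_poly_one is_poly_if is_poly_bracket

abbreviation J :: "agen fa set" where
  "J \<equiv> Jdiag d c n"

abbreviation in_J :: "agen nc_series \<Rightarrow> bool" where
  "in_J p \<equiv> nc_mem p J"

abbreviation in_N :: "agen nc_series \<Rightarrow> bool" where
  "in_N p \<equiv> nc_mem p (Nnorm d c n)"

lemma J_generators_subset_fa_fin: "Irel \<union> range (Yel d c n) \<subseteq> fa_fin"
proof -
  have "is_poly (NC (Yel d c n a))" for a by (simp add: NC_Yel)
  then show ?thesis using fa_subspace_Irel by (auto simp: fa_subspace_def)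
qed

lemma left_ideal_J: "left_ideal J"
  unfolding Jdiag_def by (rule left_ideal_left_ideal_gen[OF J_generators_subset_fa_fin])

lemma fa_subspace_J: "fa_subspace J"
  using left_ideal_J by (simp add: left_ideal_def)

lemmas in_J_zero = nc_mem_zero[OF fa_subspace_J]
lemmas in_J_add = nc_mem_add[OF fa_subspace_J]
lemmas in_J_diff = nc_mem_diff[OF fa_subspace_J]
lemmas in_J_uminus = nc_mem_uminus[OF fa_subspace_J]
lemmas in_J_scalar_mult = nc_mem_scalar_mult[OF fa_subspace_J]
lemmas in_J_sum = nc_mem_sum[OF fa_subspace_J]
lemmas in_J_is_poly = nc_mem_is_poly[OF fa_subspace_J]
lemmas in_J_mult_left = nc_mem_mult_left[OF left_ideal_J]

lemma Irel_subset_J: "Irel \<subseteq> J"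
  using left_ideal_gen_upper[of "Irel \<union> range (Yel d c n)"] unfolding Jdiag_def by auto

lemma in_J_if_in_I: "in_I p \<Longrightarrow> in_J p"
  using Irel_subset_J by (auto simp: nc_mem_def)

lemma in_J_Yel: "in_J (NC (Yel d c n a))"
  using left_ideal_gen_upper[of "Irel \<union> range (Yel d c n)"] unfolding Jdiag_def by auto

lemma in_J_mult_Y: "\<beta> < d \<Longrightarrow> is_poly q \<Longrightarrow> in_J (q * Y \<beta>)"
  using in_J_mult_left[OF _ in_J_Yel] Y_eq_Yel by simp

lemma in_J_if_congI: "p \<doteq> q \<Longrightarrow> in_J q \<Longrightarrow> in_J p"
  using in_J_add[OF in_J_if_in_I, of "p - q" q] by (simp add: congI_def)

lemma in_N_iff: "in_N p \<longleftrightarrow> is_poly p \<and> (\<forall>a. in_J (NC (Yel d c n a) * p))"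
  by (simp add: Nnorm_def nc_mem_def is_poly_def)

lemma in_N_is_poly: "in_N p \<Longrightarrow> is_poly p"
  by (simp add: in_N_iff)

text \<open>
  J is a right N-module: the series f with f q \<in> J form a left ideal containing the generators
  of J (the Y_a by definition of N), hence they contain J.
\<close>

lemma in_J_mult_in_N: "in_N q \<Longrightarrow> in_J j \<Longrightarrow> in_J (j * q)"
proof -
  assume q: "in_N q" and j: "in_J j"
  let ?K = "{f \<in> fa_fin. in_J (NC f * q)}"
  have "left_ideal ?K"
    unfolding left_ideal_def fa_subspace_def
  proof (intro conjI ballI allI)
    show "?K \<subseteq> fa_fin" by blast
    show "fa_zero \<in> ?K" using fa_fin_zero in_J_zero by (simp add: NC_zero)
  next
    fix x y assume "x \<in> ?K" "y \<in> ?K"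
    then show "fa_add x y \<in> ?K"
      using in_J_add[of "NC x * q" "NC y * q"] fa_fin_add[of x y] by (simp add: NC_add distrib_right)
  next
    fix s x assume "x \<in> ?K"
    then show "fa_smult s x \<in> ?K"
      using in_J_scalar_mult[of "NC x * q" s] fa_fin_smult[of x s] by (simp add: NC_smult mult.assoc)
  next
    fix a :: "agen fa" and x assume "a \<in> fa_fin" "x \<in> ?K"
    then show "fa_mul a x \<in> ?K"
      using in_J_mult_left[of "NC a" "NC x * q"] fa_fin_mul[of a x] by (simp add: NC_mul mult.assoc)
  qed
  moreover have "Irel \<union> range (Yel d c n) \<subseteq> ?K"
  proof
    fix f assume f: "f \<in> Irel \<union> range (Yel d c n)"
    then have "f \<in> fa_fin" using J_generators_subset_fa_fin by blast
    moreover have "in_J (NC f * q)"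
    proof (cases "f \<in> Irel")
      case True
      then show ?thesis
        using in_I_mult_right[of q "NC f"] in_N_is_poly[OF q] in_J_if_in_I by simp
    next
      case False
      then show ?thesis using f q by (auto simp: in_N_iff)
    qed
    ultimately show "f \<in> ?K" by blast
  qed
  ultimately have "J \<subseteq> ?K" unfolding Jdiag_def by (rule left_ideal_gen_least)
  then show ?thesis using j by (auto simp: nc_mem_def)
qed

lemma in_N_zero: "in_N 0"
  by (simp add: in_N_iff in_J_zero)
lemma in_N_add: "in_N p \<Longrightarrow> in_N q \<Longrightarrow> in_N (p + q)"
  by (auto simp: in_N_iff distrib_left intro: in_J_add)
lemma in_N_diff: "in_N p \<Longrightarrow> in_N q \<Longrightarrow> in_N (p - q)"
  by (auto simp: in_N_iff right_diff_distrib intro: in_J_diff)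
lemma in_N_scalar_mult: "in_N p \<Longrightarrow> in_N (scalar s * p)"
  by (simp add: in_N_iff scalar_commute in_J_scalar_mult)
lemma in_N_mult: "in_N p \<Longrightarrow> in_N q \<Longrightarrow> in_N (p * q)"
  using in_J_mult_in_N[of q "NC (Yel d c n _) * p"] by (simp add: in_N_iff mult.assoc)
lemma in_N_bracket: "in_N p \<Longrightarrow> in_N q \<Longrightarrow> in_N (bracket p q)"
  by (simp add: bracket_def in_N_diff in_N_mult)

lemma in_N_if_commutes_with_Y:
  assumes g: "is_poly g" and commutes: "\<And>\<beta>. \<beta> < d \<Longrightarrow> in_I (bracket (Y \<beta>) g)"
  shows "in_N g"
proof -
  have "in_J (NC (Yel d c n a) * g)" for a
  proof -
    have "NC (Yel d c n a) * g = (\<Sum>\<beta><d. scalar (a \<beta>) * (g * Y \<beta> + bracket (Y \<beta>) g))"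
      by (simp add: NC_Yel sum_distrib_right mult.assoc bracket_def)
    moreover have "in_J \<dots>"
      using g commutes by (intro in_J_sum in_J_scalar_mult in_J_add in_J_mult_Y in_J_if_in_I) auto
    ultimately show ?thesis by simp
  qed
  then show ?thesis using g by (simp add: in_N_iff)
qed

section \<open>The images of the generators\<close>

definition x_img :: "nat \<Rightarrow> agen nc_series" where
  "x_img i = (\<Sum>\<alpha><d. x_gen \<alpha> * e_gen \<alpha> i)"
definition y_img :: "nat \<Rightarrow> agen nc_series" where
  "y_img i = scalar (-1) * (\<Sum>\<alpha><d. d_gen \<alpha> * e_gen \<alpha> i)"
definition t_img :: "nat \<Rightarrow> nat \<Rightarrow> agen nc_series" where
  "t_img i j = (\<Sum>\<alpha><d. e_gen \<alpha> i * e_gen \<alpha> j)"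

lemma is_poly_x_img [simp]: "is_poly (x_img i)"
  by (simp add: x_img_def)
lemma is_poly_y_img [simp]: "is_poly (y_img i)"
  by (simp add: y_img_def)
lemma is_poly_t_img [simp]: "is_poly (t_img i j)"
  by (simp add: t_img_def)

lemma scalar_commute_gens:
  "x_gen a * (scalar s * q) = scalar s * (x_gen a * q)"
  "d_gen a * (scalar s * q) = scalar s * (d_gen a * q)"
  "e_gen a i * (scalar s * q) = scalar s * (e_gen a i * q)"
  "x_gen a * scalar s = scalar s * x_gen a"
  "d_gen a * scalar s = scalar s * d_gen a"
  "e_gen a i * scalar s = scalar s * e_gen a i"
  by (rule scalar_commute scalar_central[symmetric])+

lemmas normalise = sum_distrib_left sum_distrib_right mult.assoc
  scalar_commute_gens scalar_mult_scalar scalar_mult[symmetric] scalar_minus_one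
  if_zero_mult mult_if_zero uminus_if_zero sum_if_zero sum.delta sum.delta' sum.distrib[symmetric]

text \<open>
  In the computations below, what survives the reduction modulo the relations cancels by
  (anti)symmetry of the structure constants.
\<close>

lemma x_img_commutes_with_Y: "\<beta> \<in> {..<d} \<Longrightarrow> i \<in> {1..n} \<Longrightarrow> in_I (bracket (Y \<beta>) (x_img i))"
  apply (rule in_I_if_congI_zero)
   apply (simp only: Y_def x_img_def bracket_expand)
   apply ((rule congI_reduce | assumption)+)[1]
  apply (simp add: normalise)
  apply (rule sum_swap_antisym)
  by (auto intro: c_antisym_23)

lemma y_img_commutes_with_Y: "\<beta> \<in> {..<d} \<Longrightarrow> i \<in> {1..n} \<Longrightarrow> in_I (bracket (Y \<beta>) (y_img i))"
  apply (rule in_I_if_congI_zero)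
   apply (simp only: Y_def y_img_def bracket_expand)
   apply ((rule congI_reduce | assumption)+)[1]
  apply (simp add: normalise)
  by (rule sum_swap_diff)

lemma t_img_commutes_with_Y:
  "\<beta> \<in> {..<d} \<Longrightarrow> i \<in> {1..n} \<Longrightarrow> j \<in> {1..n} \<Longrightarrow> i \<noteq> j \<Longrightarrow> in_I (bracket (Y \<beta>) (t_img i j))"
  apply (rule in_I_if_congI_zero)
   apply (simp only: Y_def t_img_def bracket_expand)
   apply ((rule congI_reduce | assumption)+)[1]
  apply (simp add: normalise)
  apply (rule sum_swap_antisym)
  by (auto intro: c_antisym_23)

section \<open>The relations of tbar_{1,n} hold modulo J\<close>

lemma t_img_sym: "i \<in> {1..n} \<Longrightarrow> j \<in> {1..n} \<Longrightarrow> i \<noteq> j \<Longrightarrow> in_I (t_img i j - t_img j i)"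
proof -
  assume ij: "i \<in> {1..n}" "j \<in> {1..n}" "i \<noteq> j"
  have "(\<Sum>\<alpha><d. bracket (e_gen \<alpha> i) (e_gen \<alpha> j)) \<doteq> (\<Sum>\<alpha><d. 0)"
    using ij by (intro congI_sum bracket_e_e_distinct) auto
  then show ?thesis by (simp add: t_img_def bracket_def sum_subtractf congI_def)
qed

lemma t_img_braid:
  "i \<in> {1..n} \<Longrightarrow> j \<in> {1..n} \<Longrightarrow> k \<in> {1..n} \<Longrightarrow> distinct [i, j, k] \<Longrightarrow>
    in_I (bracket (t_img i j) (t_img i k + t_img j k))"
  apply (rule in_I_if_congI_zero)
   apply (simp only: t_img_def bracket_expand)
   apply ((rule congI_reduce | assumption)+)[1]
  apply (simp add: normalise)
  apply (rule sum.neutral, rule ballI)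
  apply (rule sum_swap_antisym)
  apply (subst c_cyclic, simp, simp, simp)
  by (auto intro: c_antisym)

lemma t_img_commute_disjoint:
  "i \<in> {1..n} \<Longrightarrow> j \<in> {1..n} \<Longrightarrow> k \<in> {1..n} \<Longrightarrow> l \<in> {1..n} \<Longrightarrow> distinct [i, j, k, l] \<Longrightarrow>
    in_I (bracket (t_img i j) (t_img k l))"
  apply (rule in_I_if_congI_zero)
   apply (simp only: t_img_def bracket_expand)
   apply ((rule congI_reduce | assumption)+)[1]
  by (simp add: normalise)

lemma bracket_x_img_y_img:
  "i \<in> {1..n} \<Longrightarrow> j \<in> {1..n} \<Longrightarrow> i \<noteq> j \<Longrightarrow> in_I (bracket (x_img i) (y_img j) - t_img i j)"
  apply (rule in_I_if_congI_zero)
   apply (simp only: x_img_def y_img_def t_img_def bracket_expand)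
   apply ((rule congI_reduce | assumption)+)[1]
  by (simp add: normalise sum_negf)

lemma x_img_commute: "i \<in> {1..n} \<Longrightarrow> j \<in> {1..n} \<Longrightarrow> in_I (bracket (x_img i) (x_img j))"
  apply (cases "i = j", simp add: bracket_self in_I_zero)
  apply (rule in_I_if_congI_zero)
   apply (simp only: x_img_def bracket_expand)
   apply ((rule congI_reduce | assumption)+)[1]
  by (simp add: normalise)

lemma y_img_commute: "i \<in> {1..n} \<Longrightarrow> j \<in> {1..n} \<Longrightarrow> in_I (bracket (y_img i) (y_img j))"
  apply (cases "i = j", simp add: bracket_self in_I_zero)
  apply (rule in_I_if_congI_zero)
   apply (simp only: y_img_def bracket_expand)
   apply ((rule congI_reduce | assumption)+)[1]
  by (simp add: normalise)

lemma x_img_t_img_commute: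
  "i \<in> {1..n} \<Longrightarrow> j \<in> {1..n} \<Longrightarrow> k \<in> {1..n} \<Longrightarrow> distinct [i, j, k] \<Longrightarrow>
    in_I (bracket (x_img i) (t_img j k))"
  apply (rule in_I_if_congI_zero)
   apply (simp only: x_img_def t_img_def bracket_expand)
   apply ((rule congI_reduce | assumption)+)[1]
  by (simp add: normalise)

lemma y_img_t_img_commute:
  "i \<in> {1..n} \<Longrightarrow> j \<in> {1..n} \<Longrightarrow> k \<in> {1..n} \<Longrightarrow> distinct [i, j, k] \<Longrightarrow>
    in_I (bracket (y_img i) (t_img j k))"
  apply (rule in_I_if_congI_zero)
   apply (simp only: y_img_def t_img_def bracket_expand)
   apply ((rule congI_reduce | assumption)+)[1]
  by (simp add: normalise)

lemma x_img_sum_t_img_commute: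
  "i \<in> {1..n} \<Longrightarrow> j \<in> {1..n} \<Longrightarrow> i \<noteq> j \<Longrightarrow> in_I (bracket (x_img i + x_img j) (t_img i j))"
  apply (rule in_I_if_congI_zero)
   apply (simp only: x_img_def t_img_def bracket_linear bracket_mult_left, (simp only: bracket_expand)?)
   apply ((rule congI_reduce | assumption)+)[1]
  apply (simp add: normalise)
  apply (rule sum_swap_antisym3)
  by (auto intro: c_antisym_23)

lemma y_img_sum_t_img_commute:
  "i \<in> {1..n} \<Longrightarrow> j \<in> {1..n} \<Longrightarrow> i \<noteq> j \<Longrightarrow> in_I (bracket (y_img i + y_img j) (t_img i j))"
  apply (rule in_I_if_congI_zero)
   apply (simp only: y_img_def t_img_def bracket_linear bracket_mult_left, (simp only: bracket_expand)?)
   apply ((rule congI_reduce | assumption)+)[1]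
  apply (simp add: normalise)
  apply (rule sum_swap_antisym3)
  by (metis c_antisym_23 lessThan_iff minus_minus)

lemma sum_c_x_d_e_reindex:
  "(\<Sum>a<d. \<Sum>g<d. \<Sum>k<d. scalar (- c a g k) * (x_gen a * (d_gen g * e_gen k i))) =
   (\<Sum>a<d. \<Sum>g<d. \<Sum>k<d. scalar (c a g k) * (x_gen k * (d_gen g * e_gen a i)))"
proof -
  have "(\<Sum>a<d. \<Sum>g<d. \<Sum>k<d. scalar (c a g k) * (x_gen k * (d_gen g * e_gen a i)))
      = (\<Sum>m<d. \<Sum>g<d. \<Sum>a<d. scalar (- c a g m) * (x_gen a * (d_gen g * e_gen m i)))"
  proof (intro sum.cong refl)
    fix m g a assume "m \<in> {..<d}" "g \<in> {..<d}" "a \<in> {..<d}"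
    then have "c m g a = - c a g m" using c_cyclic[of m g a] c_antisym[of g a m] by simp
    then show "scalar (c m g a) * (x_gen a * (d_gen g * e_gen m i))
        = scalar (- c a g m) * (x_gen a * (d_gen g * e_gen m i))" by simp
  qed
  also have "\<dots> = (\<Sum>a<d. \<Sum>g<d. \<Sum>m<d. scalar (- c a g m) * (x_gen a * (d_gen g * e_gen m i)))"
    by (rule sum_swap_13)
  finally show ?thesis by simp
qed

lemma bracket_x_img_y_img_same_congI:
  assumes i: "i \<in> {1..n}"
  shows "bracket (x_img i) (y_img i) + (\<Sum>j\<in>{1..n}-{i}. t_img i j) \<doteq> (\<Sum>\<alpha><d. e_gen \<alpha> i * Y \<alpha>)"
proof -
  have move_e: "e_gen a i * (scalar s * M) = scalar s * (M * e_gen a i + bracket (e_gen a i) M)"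
    for a s M
    by (simp add: scalar_commute bracket_def)
  have "(\<Sum>\<alpha><d. e_gen \<alpha> i * Y \<alpha>) =
      (\<Sum>\<alpha><d. (\<Sum>\<gamma><d. \<Sum>k<d. scalar (c \<alpha> \<gamma> k) *
          (x_gen k * d_gen \<gamma> * e_gen \<alpha> i + bracket (e_gen \<alpha> i) (x_gen k * d_gen \<gamma>)))
        + (\<Sum>j\<in>{1..n}. e_gen \<alpha> i * e_gen \<alpha> j))"
    by (simp add: Y_def distrib_left sum_distrib_left move_e)
  moreover have "in_I (bracket (x_img i) (y_img i) + (\<Sum>j\<in>{1..n}-{i}. t_img i j) -
      (\<Sum>\<alpha><d. (\<Sum>\<gamma><d. \<Sum>k<d. scalar (c \<alpha> \<gamma> k) *
          (x_gen k * d_gen \<gamma> * e_gen \<alpha> i + bracket (e_gen \<alpha> i) (x_gen k * d_gen \<gamma>)))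
        + (\<Sum>j\<in>{1..n}. e_gen \<alpha> i * e_gen \<alpha> j)))"
    using i
    apply -
    apply (rule in_I_if_congI_zero)
     apply (simp only: x_img_def y_img_def t_img_def bracket_linear bracket_mult_left,
        (simp only: bracket_expand)?)
     apply ((rule congI_reduce | assumption)+)[1]
    apply (simp add: normalise)
    apply (simp add: sum.distrib sum_c_x_d_e_reindex)
    by (rule sum_remove_swap) auto
  ultimately show ?thesis by (simp add: congI_def)
qed

lemma bracket_x_img_y_img_same:
  "i \<in> {1..n} \<Longrightarrow> in_J (bracket (x_img i) (y_img i) + (\<Sum>j\<in>{1..n}-{i}. t_img i j))"
  by (rule in_J_if_congI[OF bracket_x_img_y_img_same_congI]) (auto intro: in_J_sum in_J_mult_Y)

text \<open>
  sum_i x_i and sum_i y_i differ from the elements sum_a x_a Y_{e_a} and sum_a d_a Y_{e_a} of J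
  by a term S with S + S in the relation ideal (by antisymmetry of c); halving puts S there too.
\<close>

lemma sum_x_img_in_J: "in_J (\<Sum>i\<in>{1..n}. x_img i)"
proof -
  define S where "S = (\<Sum>a<d. \<Sum>g<d. \<Sum>k<d. scalar (c a g k) * (x_gen a * (x_gen k * d_gen g)))"
  have Y_part: "in_J (\<Sum>a<d. x_gen a * Y a)" by (intro in_J_sum in_J_mult_Y) auto
  have "(\<Sum>a<d. x_gen a * Y a) = S + (\<Sum>a<d. \<Sum>i\<in>{1..n}. x_gen a * e_gen a i)"
    by (simp add: S_def Y_def distrib_left sum_distrib_left scalar_commute sum.distrib)
  then have sum_x_img: "(\<Sum>i\<in>{1..n}. x_img i) = (\<Sum>a<d. x_gen a * Y a) - S"
    unfolding x_img_def by (simp only: add_diff_cancel_left') (rule sum.swap)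
  have S_swapped: "(\<Sum>a<d. \<Sum>g<d. \<Sum>k<d. scalar (c a g k) * (x_gen k * (x_gen a * d_gen g))) = - S"
  proof -
    have "(\<Sum>a<d. \<Sum>g<d. \<Sum>k<d. scalar (c a g k) * (x_gen k * (x_gen a * d_gen g)))
       = (\<Sum>k<d. \<Sum>g<d. \<Sum>a<d. scalar (c a g k) * (x_gen k * (x_gen a * d_gen g)))"
      by (rule sum_swap_13)
    also have "\<dots> = (\<Sum>k<d. \<Sum>g<d. \<Sum>a<d. - (scalar (c k g a) * (x_gen k * (x_gen a * d_gen g))))"
    proof (intro sum.cong refl)
      fix k g a assume "k \<in> {..<d}" "g \<in> {..<d}" "a \<in> {..<d}"
      then have "c a g k = - c k g a"
        using c_antisym_23[of a g k] c_cyclic[of a k g] c_cyclic[of k g a] by simp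
      then show "scalar (c a g k) * (x_gen k * (x_gen a * d_gen g))
          = - (scalar (c k g a) * (x_gen k * (x_gen a * d_gen g)))"
        by (simp add: scalar_uminus)
    qed
    finally show ?thesis by (simp add: S_def sum_negf)
  qed

  have "S + S = S - (\<Sum>a<d. \<Sum>g<d. \<Sum>k<d. scalar (c a g k) * (x_gen k * (x_gen a * d_gen g)))"
    using S_swapped by simp
  also have "\<dots> = (\<Sum>a<d. \<Sum>g<d. \<Sum>k<d. scalar (c a g k) * (bracket (x_gen a) (x_gen k) * d_gen g))"
    by (simp add: S_def bracket_def sum_subtractf[symmetric] algebra_simps)
  finally have "in_I (S + S)"
    using bracket_x_x by (auto simp: congI_def intro!: in_I_sum in_I_scalar_mult in_I_mult_right)
  then have "in_I S" by (rule in_I_half)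
  then show ?thesis unfolding sum_x_img by (intro in_J_diff Y_part in_J_if_in_I)
qed

lemma sum_c_bracket_d_x_in_I:
  "in_I (\<Sum>a<d. \<Sum>g<d. \<Sum>k<d. scalar (c a g k) * (bracket (d_gen a) (x_gen k) * d_gen g))"
  apply (rule in_I_if_congI_zero)
   apply ((rule congI_reduce | assumption)+)[1]
  apply (simp add: normalise)
  apply (rule sum.neutral)
  by (auto simp: c_diag)

lemma sum_y_img_in_J: "in_J (\<Sum>i\<in>{1..n}. y_img i)"
proof -
  define T where "T = (\<Sum>a<d. \<Sum>g<d. \<Sum>k<d. scalar (c a g k) * (d_gen a * (x_gen k * d_gen g)))"
  define U where "U = (\<Sum>a<d. \<Sum>g<d. \<Sum>k<d. scalar (c a g k) * (x_gen k * (d_gen a * d_gen g)))"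
  define V where "V = (\<Sum>a<d. \<Sum>g<d. \<Sum>k<d. scalar (c a g k) * (bracket (d_gen a) (x_gen k) * d_gen g))"
  have Y_part: "in_J (\<Sum>a<d. d_gen a * Y a)" by (intro in_J_sum in_J_mult_Y) auto
  have "(\<Sum>a<d. d_gen a * Y a) = T + (\<Sum>a<d. \<Sum>i\<in>{1..n}. d_gen a * e_gen a i)"
    by (simp add: T_def Y_def distrib_left sum_distrib_left scalar_commute sum.distrib)
  moreover have "(\<Sum>i\<in>{1..n}. \<Sum>a<d. d_gen a * e_gen a i) = (\<Sum>a<d. \<Sum>i\<in>{1..n}. d_gen a * e_gen a i)"
    by (rule sum.swap)
  ultimately have sum_y_img: "(\<Sum>i\<in>{1..n}. y_img i) = T - (\<Sum>a<d. d_gen a * Y a)"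
    unfolding y_img_def scalar_minus_one sum_negf by simp
  have "T = U + V"
    by (simp add: T_def U_def V_def bracket_def sum.distrib[symmetric] algebra_simps)
  have "in_I V"
    unfolding V_def by (rule sum_c_bracket_d_x_in_I)
  have U_swapped: "(\<Sum>a<d. \<Sum>g<d. \<Sum>k<d. scalar (c a g k) * (x_gen k * (d_gen g * d_gen a))) = - U"
  proof -
    have "(\<Sum>a<d. \<Sum>g<d. \<Sum>k<d. scalar (c a g k) * (x_gen k * (d_gen g * d_gen a)))
       = (\<Sum>g<d. \<Sum>a<d. \<Sum>k<d. scalar (c a g k) * (x_gen k * (d_gen g * d_gen a)))"
      by (rule sum.swap)
    also have "\<dots> = (\<Sum>g<d. \<Sum>a<d. \<Sum>k<d. - (scalar (c g a k) * (x_gen k * (d_gen g * d_gen a))))"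
    proof (intro sum.cong refl)
      fix k g a assume "k \<in> {..<d}" "g \<in> {..<d}" "a \<in> {..<d}"
      then have "c a g k = - c g a k" using c_antisym[of a g k] by simp
      then show "scalar (c a g k) * (x_gen k * (d_gen g * d_gen a))
          = - (scalar (c g a k) * (x_gen k * (d_gen g * d_gen a)))"
        by (simp add: scalar_uminus)
    qed
    finally show ?thesis by (simp add: U_def sum_negf)
  qed

  have "U + U = U - (\<Sum>a<d. \<Sum>g<d. \<Sum>k<d. scalar (c a g k) * (x_gen k * (d_gen g * d_gen a)))"
    using U_swapped by simp
  also have "\<dots> = (\<Sum>a<d. \<Sum>g<d. \<Sum>k<d. scalar (c a g k) * (x_gen k * bracket (d_gen a) (d_gen g)))"
    by (simp add: U_def bracket_def sum_subtractf[symmetric] algebra_simps)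
  finally have "in_I (U + U)"
    using bracket_d_d by (auto simp: congI_def intro!: in_I_sum in_I_scalar_mult in_I_mult_left)
  then have "in_I U" by (rule in_I_half)
  then have "in_I T" using \<open>in_I V\<close> \<open>T = U + V\<close> by (simp add: in_I_add)
  then show ?thesis unfolding sum_y_img by (intro in_J_diff Y_part in_J_if_in_I)
qed

definition gen_img :: "tgen \<Rightarrow> agen nc_series" where
  "gen_img v = (case v of TX i \<Rightarrow> x_img i | TY i \<Rightarrow> y_img i | TT i j \<Rightarrow> t_img i j)"

lemma gen_img_simps [simp]:
  "gen_img (TX i) = x_img i" "gen_img (TY i) = y_img i" "gen_img (TT i j) = t_img i j"
  by (simp_all add: gen_img_def)

lemma is_poly_eval_gen_img [simp]: "is_poly (nc_eval gen_img u)"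
proof (rule is_poly_nc_eval)
  show "is_poly (gen_img v)" for v by (cases v) simp_all
qed

lemma gen_img_in_N: "v \<in> t_gens n \<Longrightarrow> in_N (gen_img v)"
  unfolding t_gens_def
  by (auto intro!: in_N_if_commutes_with_Y x_img_commutes_with_Y y_img_commutes_with_Y
      t_img_commutes_with_Y)

lemma eval_tL_in_N: "u \<in> tL n \<Longrightarrow> in_N (nc_eval gen_img u)"
proof -
  let ?K = "{u \<in> fa_fin. in_N (nc_eval gen_img u)}"
  have "lie_sub ?K"
    unfolding lie_sub_def fa_subspace_def
    by (auto simp: nc_eval_zero in_N_zero nc_eval_add nc_eval_smult nc_eval_br
        fa_fin_add fa_fin_smult fa_fin_br
        intro: in_N_add in_N_scalar_mult in_N_bracket fa_fin_zero)
  moreover have "fa_gen ` t_gens n \<subseteq> ?K"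
    using gen_img_in_N by (auto simp: nc_eval_gen)
  ultimately have "tL n \<subseteq> ?K" by (rule tL_least)
  then show "u \<in> tL n \<Longrightarrow> in_N (nc_eval gen_img u)" by blast
qed

lemmas t_rels_images_in_I = t_img_sym t_img_braid t_img_commute_disjoint bracket_x_img_y_img
  x_img_commute y_img_commute x_img_t_img_commute y_img_t_img_commute
  x_img_sum_t_img_commute y_img_sum_t_img_commute

lemma eval_t_rels_in_J: "r \<in> t_rels n \<Longrightarrow> in_J (nc_eval gen_img r)"
  unfolding t_rels_def
  apply (elim UnE)
             apply (auto simp: nc_eval_sub nc_eval_br nc_eval_add nc_eval_fa_sum nc_eval_gen
      fa_fin_br fa_fin_add fa_fin_sub fa_fin_sum intro!: t_rels_images_in_I[THEN in_J_if_in_I])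
  using bracket_x_img_y_img_same sum_x_img_in_J sum_y_img_in_J by auto

lemma eval_tR_in_J: "u \<in> tR n \<Longrightarrow> in_J (nc_eval gen_img u)"
proof -
  let ?K = "{u \<in> tL n. in_J (nc_eval gen_img u)}"
  have "lie_ideal_in (tL n) ?K"
    unfolding lie_ideal_in_def fa_subspace_def
  proof (intro conjI ballI allI)
    show "?K \<subseteq> fa_fin" using tL_subset_fa_fin by blast
    show "fa_zero \<in> ?K" by (simp add: tL_zero nc_eval_zero in_J_zero)
    show "?K \<subseteq> tL n" by blast
  next
    fix x y assume "x \<in> ?K" "y \<in> ?K"
    then show "fa_add x y \<in> ?K"
      by (auto simp: nc_eval_add tL_subset_fa_fin intro: tL_add in_J_add)
  next
    fix s x assume "x \<in> ?K"
    then show "fa_smult s x \<in> ?K"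
      by (auto simp: nc_eval_smult intro: tL_smult in_J_scalar_mult)
  next
    fix x k assume x: "x \<in> tL n" and k: "k \<in> ?K"
    have "in_J (nc_eval gen_img x * nc_eval gen_img k - nc_eval gen_img k * nc_eval gen_img x)"
      using k eval_tL_in_N[OF x] by (intro in_J_diff in_J_mult_left in_J_mult_in_N) auto
    then show "fa_br x k \<in> ?K"
      using x k by (auto simp: nc_eval_br tL_subset_fa_fin bracket_def intro: tL_br)
  qed
  moreover have "t_rels n \<subseteq> ?K"
    using t_rels_subset_tL eval_t_rels_in_J by blast
  ultimately have "tR n \<subseteq> ?K" by (rule tR_least)
  then show "u \<in> tR n \<Longrightarrow> in_J (nc_eval gen_img u)" by blast
qed

lemma cosH_self: "p \<in> cosH d c n p"
proof -
  have "fa_zero \<in> J" using fa_subspace_J by (simp add: fa_subspace_def)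
  moreover have "fa_add p fa_zero = p" by (simp add: fa_add_def fa_zero_def)
  ultimately show ?thesis unfolding cosH_def by force
qed

lemma in_J_if_in_cosH: "x \<in> cosH d c n (nc_coeff P) \<Longrightarrow> in_J (NC x - P)"
proof -
  assume "x \<in> cosH d c n (nc_coeff P)"
  then obtain j where "j \<in> J" "x = fa_add (nc_coeff P) j" unfolding cosH_def by blast
  moreover from this have "NC x - P = NC j" by (simp add: NC_add)
  ultimately show ?thesis by simp
qed

lemma cosH_subset: "in_J (P - Q) \<Longrightarrow> cosH d c n (nc_coeff P) \<subseteq> cosH d c n (nc_coeff Q)"
proof
  fix x assume PQ: "in_J (P - Q)" and x: "x \<in> cosH d c n (nc_coeff P)"
  have "in_J ((NC x - P) + (P - Q))"
    using in_J_if_in_cosH[OF x] PQ by (rule in_J_add)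
  then have "nc_coeff (NC x - Q) \<in> J" by (simp add: nc_mem_def)
  moreover have "x = fa_add (nc_coeff Q) (nc_coeff (NC x - Q))"
    by (simp add: fa_add_def fa_sub_def fun_eq_iff)
  ultimately show "x \<in> cosH d c n (nc_coeff Q)" unfolding cosH_def by blast
qed

lemma cosH_eq: "in_J (P - Q) \<Longrightarrow> cosH d c n (nc_coeff P) = cosH d c n (nc_coeff Q)"
  using cosH_subset in_J_uminus[of "P - Q"] by (metis minus_diff_eq subset_antisym)

definition rho :: "tgen fa set \<Rightarrow> agen fa set" where
  "rho U = (if U \<in> tbar n
     then cosH d c n (nc_coeff (nc_eval gen_img (SOME u. u \<in> tL n \<and> U = cosT n u))) else {})"

lemma rho_cosT: "u \<in> tL n \<Longrightarrow> rho (cosT n u) = cosH d c n (nc_coeff (nc_eval gen_img u))"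
proof -
  assume u: "u \<in> tL n"
  define u' where "u' = (SOME u'. u' \<in> tL n \<and> cosT n u = cosT n u')"
  have "u' \<in> tL n \<and> cosT n u = cosT n u'"
    unfolding u'_def by (rule someI[of _ u]) (simp add: u)
  then have u': "u' \<in> tL n" "cosT n u' = cosT n u" by auto
  then have "in_J (nc_eval gen_img (fa_sub u' u))"
    by (intro eval_tR_in_J cosT_eq_imp_diff_in_tR)
  then have "in_J (nc_eval gen_img u' - nc_eval gen_img u)"
    using u u' by (simp add: nc_eval_sub tL_subset_fa_fin)
  then have "cosH d c n (nc_coeff (nc_eval gen_img u')) = cosH d c n (nc_coeff (nc_eval gen_img u))"
    by (rule cosH_eq)
  moreover have "cosT n u \<in> tbar n" using u by (simp add: tbar_def)
  ultimately show ?thesis by (simp add: rho_def u'_def)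
qed

lemma bracket_congJ:
  assumes "in_N a" "in_N b" "in_J (P - a)" "in_J (Q - b)"
  shows "in_J (bracket a b - bracket P Q)"
proof -
  define jp jq where "jp = P - a" and "jq = Q - b"
  have "bracket a b - bracket P Q = - ((a * jq - jq * a) + (jp * b - b * jp) + (jp * jq - jq * jp))"
    by (simp add: jp_def jq_def bracket_def algebra_simps)
  moreover have "in_J (- ((a * jq - jq * a) + (jp * b - b * jp) + (jp * jq - jq * jp)))"
    using assms in_J_is_poly[of jp] in_J_is_poly[of jq] in_N_is_poly
    by (intro in_J_add in_J_uminus in_J_diff in_J_mult_left in_J_mult_in_N) (auto simp: jp_def jq_def)
  ultimately show ?thesis by simp
qed

lemma in_J_if_in_rho: "u \<in> tL n \<Longrightarrow> p \<in> rho (cosT n u) \<Longrightarrow> in_J (NC p - nc_eval gen_img u)"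
  by (simp add: rho_cosT in_J_if_in_cosH)

lemma rho_add:
  assumes u: "u \<in> tL n" and v: "v \<in> tL n" and p: "p \<in> rho (cosT n u)" and q: "q \<in> rho (cosT n v)"
  shows "rho (cosT n (fa_add u v)) = cosH d c n (fa_add p q)"
proof -
  have "rho (cosT n (fa_add u v)) = cosH d c n (nc_coeff (nc_eval gen_img u + nc_eval gen_img v))"
    using u v by (simp add: rho_cosT tL_add nc_eval_add tL_subset_fa_fin)
  also have "\<dots> = cosH d c n (nc_coeff (NC p + NC q))"
  proof (rule cosH_eq)
    have "in_J (- ((NC p - nc_eval gen_img u) + (NC q - nc_eval gen_img v)))"
      using in_J_if_in_rho[OF u p] in_J_if_in_rho[OF v q] by (intro in_J_uminus in_J_add)
    then show "in_J (nc_eval gen_img u + nc_eval gen_img v - (NC p + NC q))"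
      by (simp add: algebra_simps)
  qed
  finally show ?thesis by simp
qed

lemma rho_br:
  assumes u: "u \<in> tL n" and v: "v \<in> tL n" and p: "p \<in> rho (cosT n u)" and q: "q \<in> rho (cosT n v)"
  shows "rho (cosT n (fa_br u v)) = cosH d c n (fa_br p q)"
proof -
  have "rho (cosT n (fa_br u v))
      = cosH d c n (nc_coeff (bracket (nc_eval gen_img u) (nc_eval gen_img v)))"
    using u v by (simp add: rho_cosT tL_br nc_eval_br tL_subset_fa_fin)
  also have "\<dots> = cosH d c n (nc_coeff (bracket (NC p) (NC q)))"
    using eval_tL_in_N[OF u] eval_tL_in_N[OF v] in_J_if_in_rho[OF u p] in_J_if_in_rho[OF v q]
    by (intro cosH_eq bracket_congJ)
  finally show ?thesis by (simp add: bracket_def fa_br_def)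
qed

lemma rho_smult:
  assumes u: "u \<in> tL n" and p: "p \<in> rho (cosT n u)"
  shows "rho (cosT n (fa_smult s u)) = cosH d c n (fa_smult s p)"
proof -
  have "rho (cosT n (fa_smult s u)) = cosH d c n (nc_coeff (scalar s * nc_eval gen_img u))"
    using u by (simp add: rho_cosT tL_smult nc_eval_smult)
  also have "\<dots> = cosH d c n (nc_coeff (scalar s * NC p))"
  proof (rule cosH_eq)
    have "in_J (scalar s * - (NC p - nc_eval gen_img u))"
      using in_J_if_in_rho[OF u p] by (intro in_J_scalar_mult in_J_uminus)
    then show "in_J (scalar s * nc_eval gen_img u - scalar s * NC p)"
      by (simp add: algebra_simps)
  qed
  finally show ?thesis by (simp add: fa_mul_scalar_left)
qed

lemma rho_in_Hecke: "U \<in> tbar n \<Longrightarrow> rho U \<in> Hecke d c n"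
proof -
  assume "U \<in> tbar n"
  then obtain u where u: "u \<in> tL n" "U = cosT n u" by (auto simp: tbar_def)
  then have "nc_coeff (nc_eval gen_img u) \<in> Nnorm d c n"
    using eval_tL_in_N[OF u(1)] by (simp add: nc_mem_def)
  then show ?thesis using u rho_cosT by (simp add: Hecke_def)
qed

lemma lie_hom_rho: "lie_hom_tH d c n rho"
  unfolding lie_hom_tH_def
  by (simp add: rho_in_Hecke rho_add rho_br rho_smult) (simp add: rho_def)

lemma NC_x_img: "NC (fa_sum (\<lambda>\<alpha>. fa_mul (fa_gen (Xg \<alpha>)) (fa_gen (Eg \<alpha> i))) {..<d}) = x_img i"
  by (simp add: x_img_def NC_sum NC_mul x_gen_def e_gen_def)

lemma NC_y_img:
  "NC (fa_smult (-1) (fa_sum (\<lambda>\<alpha>. fa_mul (fa_gen (Dg \<alpha>)) (fa_gen (Eg \<alpha> i))) {..<d})) = y_img i"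
  by (simp add: y_img_def NC_smult NC_sum NC_mul d_gen_def e_gen_def)

lemma NC_t_img: "NC (fa_sum (\<lambda>\<alpha>. fa_mul (fa_gen (Eg \<alpha> i)) (fa_gen (Eg \<alpha> j))) {..<d}) = t_img i j"
  by (simp add: t_img_def NC_sum NC_mul e_gen_def)

abbreviation on_generators :: "(tgen fa set \<Rightarrow> agen fa set) \<Rightarrow> bool" where
  "on_generators \<phi> \<equiv>
    (\<forall>i\<in>{1..n}. \<phi> (cosT n (fa_gen (TX i))) =
       cosH d c n (fa_sum (\<lambda>\<alpha>. fa_mul (fa_gen (Xg \<alpha>)) (fa_gen (Eg \<alpha> i))) {..<d}))
  \<and> (\<forall>i\<in>{1..n}. \<phi> (cosT n (fa_gen (TY i))) =
       cosH d c n (fa_smult (-1) (fa_sum (\<lambda>\<alpha>. fa_mul (fa_gen (Dg \<alpha>)) (fa_gen (Eg \<alpha> i))) {..<d})))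
  \<and> (\<forall>i\<in>{1..n}. \<forall>j\<in>{1..n}. i \<noteq> j \<longrightarrow> \<phi> (cosT n (fa_gen (TT i j))) =
       cosH d c n (fa_sum (\<lambda>\<alpha>. fa_mul (fa_gen (Eg \<alpha> i)) (fa_gen (Eg \<alpha> j))) {..<d}))"

lemma on_generators_iff:
  "on_generators \<phi> \<longleftrightarrow>
    (\<forall>v\<in>t_gens n. \<phi> (cosT n (fa_gen v)) = cosH d c n (nc_coeff (gen_img v)))"
  unfolding t_gens_def
  by (auto simp: NC_x_img[symmetric] NC_y_img[symmetric] NC_t_img[symmetric] simp del: NC_nc_coeff)

lemma rho_on_generators: "on_generators rho"
  unfolding on_generators_iff using fa_gen_in_tL by (simp add: rho_cosT nc_eval_gen)

lemma lie_hom_tH_zero: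
  assumes hom: "lie_hom_tH d c n \<psi>"
  shows "\<psi> (cosT n fa_zero) = cosH d c n fa_zero"
proof -
  have "cosT n fa_zero \<in> tbar n" using tL_zero by (simp add: tbar_def)
  then obtain r where "\<psi> (cosT n fa_zero) = cosH d c n r"
    using hom by (auto simp: lie_hom_tH_def Hecke_def)
  then have "r \<in> \<psi> (cosT n fa_zero)" using cosH_self by simp
  then have "\<psi> (cosT n (fa_smult 0 fa_zero)) = cosH d c n (fa_smult 0 r)"
    using hom tL_zero by (simp add: lie_hom_tH_def)
  moreover have "fa_smult 0 (fa_zero :: tgen fa) = fa_zero" "fa_smult 0 r = fa_zero"
    by (simp_all add: fa_smult_def fa_zero_def)
  ultimately show ?thesis by simp
qed

lemma lie_sub_agree_with_rho:
  assumes hom: "lie_hom_tH d c n \<psi>"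
  shows "lie_sub {u \<in> tL n. \<psi> (cosT n u) = cosH d c n (nc_coeff (nc_eval gen_img u))}"
    (is "lie_sub ?K")
proof -
  note add_br = hom[unfolded lie_hom_tH_def, THEN conjunct2, THEN conjunct2, THEN conjunct1, rule_format]
  note smult = hom[unfolded lie_hom_tH_def, THEN conjunct2, THEN conjunct2, THEN conjunct2, rule_format]
  have rep: "nc_coeff (nc_eval gen_img u) \<in> \<psi> (cosT n u)" if "u \<in> ?K" for u
    using that cosH_self by auto
  show ?thesis
    unfolding lie_sub_def fa_subspace_def
  proof (intro conjI ballI allI)
    show "?K \<subseteq> fa_fin" using tL_subset_fa_fin by blast
  next
    show "fa_zero \<in> ?K"
      using tL_zero lie_hom_tH_zero[OF hom] by (simp add: nc_eval_zero)
  next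
    fix u v assume u: "u \<in> ?K" and v: "v \<in> ?K"
    then have "\<psi> (cosT n (fa_add u v))
        = cosH d c n (fa_add (nc_coeff (nc_eval gen_img u)) (nc_coeff (nc_eval gen_img v)))"
      using add_br[OF _ _ rep[OF u] rep[OF v]] by blast
    moreover have "u \<in> tL n" "v \<in> tL n" using u v by auto
    ultimately show "fa_add u v \<in> ?K"
      by (simp add: tL_add nc_eval_add tL_subset_fa_fin)
  next
    fix s u assume u: "u \<in> ?K"
    then have "\<psi> (cosT n (fa_smult s u)) = cosH d c n (fa_smult s (nc_coeff (nc_eval gen_img u)))"
      using smult[OF _ rep[OF u]] by blast
    moreover have "u \<in> tL n" using u by auto
    ultimately show "fa_smult s u \<in> ?K"
      by (simp add: tL_smult nc_eval_smult fa_mul_scalar_left)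
  next
    fix u v assume u: "u \<in> ?K" and v: "v \<in> ?K"
    then have "\<psi> (cosT n (fa_br u v))
        = cosH d c n (fa_br (nc_coeff (nc_eval gen_img u)) (nc_coeff (nc_eval gen_img v)))"
      using add_br[OF _ _ rep[OF u] rep[OF v]] by blast
    moreover have uv: "u \<in> tL n" "v \<in> tL n" using u v by auto
    moreover have "fa_br (nc_coeff (nc_eval gen_img u)) (nc_coeff (nc_eval gen_img v))
        = nc_coeff (nc_eval gen_img (fa_br u v))"
      using uv by (simp only: nc_eval_br tL_subset_fa_fin) (simp add: bracket_def fa_br_def)
    ultimately show "fa_br u v \<in> ?K" by (simp add: tL_br)
  qed
qed

lemma lie_hom_unique:
  assumes hom: "lie_hom_tH d c n \<psi>" and gens: "on_generators \<psi>"
  shows "\<psi> = rho"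
proof
  fix U
  let ?K = "{u \<in> tL n. \<psi> (cosT n u) = cosH d c n (nc_coeff (nc_eval gen_img u))}"
  have "tL n \<subseteq> ?K"
  proof (rule tL_least[OF lie_sub_agree_with_rho[OF hom]])
    show "fa_gen ` t_gens n \<subseteq> ?K"
      using gens fa_gen_in_tL unfolding on_generators_iff by (auto simp: nc_eval_gen)
  qed
  then have agree: "\<psi> (cosT n u) = rho (cosT n u)" if "u \<in> tL n" for u
    using that by (auto simp: rho_cosT)
  show "\<psi> U = rho U"
  proof (cases "U \<in> tbar n")
    case True
    then show ?thesis using agree by (auto simp: tbar_def)
  next
    case False
    then show ?thesis using hom by (simp add: lie_hom_tH_def rho_def)
  qed
qed

end

theorem mainTheorem10:
  fixes d n :: nat and c :: "nat \<Rightarrow> nat \<Rightarrow> nat \<Rightarrow> complex"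
  assumes "quadratic_lie d c"
  shows "\<exists>!\<phi>. lie_hom_tH d c n \<phi>
    \<and> (\<forall>i\<in>{1..n}. \<phi> (cosT n (fa_gen (TX i))) =
          cosH d c n (fa_sum (\<lambda>\<alpha>. fa_mul (fa_gen (Xg \<alpha>)) (fa_gen (Eg \<alpha> i))) {..<d}))
    \<and> (\<forall>i\<in>{1..n}. \<phi> (cosT n (fa_gen (TY i))) =
          cosH d c n (fa_smult (-1) (fa_sum (\<lambda>\<alpha>. fa_mul (fa_gen (Dg \<alpha>)) (fa_gen (Eg \<alpha> i))) {..<d})))
    \<and> (\<forall>i\<in>{1..n}. \<forall>j\<in>{1..n}. i \<noteq> j \<longrightarrow> \<phi> (cosT n (fa_gen (TT i j))) =
          cosH d c n (fa_sum (\<lambda>\<alpha>. fa_mul (fa_gen (Eg \<alpha> i)) (fa_gen (Eg \<alpha> j))) {..<d}))"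
proof -
  interpret quadratic_lie_data d n c by (rule quadratic_lie_data.intro) (rule assms)
  show ?thesis
  proof (rule ex1I[of _ rho])
    show "lie_hom_tH d c n rho \<and> on_generators rho"
      using lie_hom_rho rho_on_generators by blast
  next
    fix \<psi> assume "lie_hom_tH d c n \<psi> \<and> on_generators \<psi>"
    then show "\<psi> = rho" using lie_hom_unique by blast
  qed
qed

end
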